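(* Let $S \subset \mathbb{Z}^2$ be a digital convex set of $n$ lattice points, i.e. $\operatorname{conv}(S) \cap \mathbb{Z}^2 = S$. Then the QuickHull algorithm (described in the context) computes the convex hull of $S$ using $O(n)$ time and $O(n)$ space.
   Context: $\operatorname{conv}(S)$ denotes the convex hull of $S$. A set $S\subset\mathbb{Z}^d$ is digital convex if $\operatorname{conv}(S)\cap\mathbb{Z}^d=S$. The QuickHull algorithm on a finite planar point set $S$: it first computes the top-most and bottom-most points of $S$, then the two extreme points of $S$ in the directions normal to the line through these two points; these (up to) four points form a convex polygon called the partial hull, and points of $S$ lying in the partial hull are discarded. Then, repeatedly, for every edge $ab$ of the current partial hull whose points have not all been resolved, with outward normal $v$, the algorithm finds among the remaining (non-discarded) points associated to that edge the points extreme in direction $v$ (farthest from the line $ab$ on the outer side). If no remaining point lies strictly outside the edge, the edge is an edge of the convex hull. Otherwise the farthest point(s) are inserted as vertices of the partial hull between $a$ and $b$ (when several points are equally farthest, they all lie on the hull, and the first and last of them are inserted), and all points now lying in the enlarged partial hull (including points on its boundary edges) are discarded. One round of this processing over all edges of the current partial hull is a step. The algorithm ends when no point remains, yielding $\operatorname{conv}(S)$. *)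

theory Defs
  imports "HOL-Analysis.Analysis"
begin

type_synonym pt = "int \<times> int"

definition rpt :: "pt \<Rightarrow> real \<times> real" where
  "rpt p = (real_of_int (fst p), real_of_int (snd p))"

definition digital_convex :: "pt set \<Rightarrow> bool" where
  "digital_convex S \<longleftrightarrow> convex hull (rpt ` S) \<inter> range rpt = rpt ` S"

definition cross :: "pt \<Rightarrow> pt \<Rightarrow> int" where
  "cross u v = fst u * snd v - snd u * fst v"

definition dotp :: "pt \<Rightarrow> pt \<Rightarrow> int" where
  "dotp u v = fst u * fst v + snd u * snd v"

text \<open>Signed (scaled) distance of p from the directed line a->b; positive iff p lies
  strictly to the right of a->b, i.e. strictly outside the edge ab of a
  counterclockwise polygon.\<close>
definition outd :: "pt \<Rightarrow> pt \<Rightarrow> pt \<Rightarrow> int" where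
  "outd a b p = cross (p - a) (b - a)"

definition right_of :: "pt \<Rightarrow> pt \<Rightarrow> pt set \<Rightarrow> pt set" where
  "right_of a b P = {p \<in> P. outd a b p > 0}"

text \<open>An edge of the partial hull: endpoints (a, b) (counterclockwise order) together with
  the set of remaining (non-discarded) points associated to it, i.e. lying strictly outside it.
  The edge is resolved iff its point set is empty.\<close>
type_synonym edge = "pt \<times> pt \<times> pt set"

definition top_pt :: "pt set \<Rightarrow> pt" where
  "top_pt S = (THE t. t \<in> S \<and> (\<forall>p\<in>S. snd p < snd t \<or> (snd p = snd t \<and> fst p \<le> fst t)))"

definition bot_pt :: "pt set \<Rightarrow> pt" where
  "bot_pt S = (THE t. t \<in> S \<and> (\<forall>p\<in>S. snd t < snd p \<or> (snd p = snd t \<and> fst t \<le> fst p)))"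

definition farthest :: "pt \<Rightarrow> pt \<Rightarrow> pt set \<Rightarrow> pt set" where
  "farthest a b P = {p \<in> P. outd a b p = Max (outd a b ` P)}"

definition extreme_pt :: "pt \<Rightarrow> pt \<Rightarrow> pt set \<Rightarrow> pt" where
  "extreme_pt a b S = (SOME p. p \<in> farthest a b S)"

definition qh_init_edges :: "pt \<Rightarrow> pt \<Rightarrow> pt set \<Rightarrow> edge list" where
  "qh_init_edges a b S =
     (if right_of a b S = {} then [(a, b, {})]
      else (let l = extreme_pt a b S in [(a, l, right_of a l S), (l, b, right_of l b S)]))"

text \<open>Initial partial hull (counterclockwise: t, left extreme, b, right extreme).\<close>
definition qh_init :: "pt set \<Rightarrow> edge list" where
  "qh_init S = (let t = top_pt S; b = bot_pt S in
     if t = b then [(t, t, {})] else qh_init_edges t b S @ qh_init_edges b t S)"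

definition first_along :: "pt \<Rightarrow> pt \<Rightarrow> pt set \<Rightarrow> pt" where
  "first_along a b F = (THE f. f \<in> F \<and> (\<forall>q\<in>F. dotp (b - a) f \<le> dotp (b - a) q))"

definition last_along :: "pt \<Rightarrow> pt \<Rightarrow> pt set \<Rightarrow> pt" where
  "last_along a b F = (THE f. f \<in> F \<and> (\<forall>q\<in>F. dotp (b - a) q \<le> dotp (b - a) f))"

definition process_edge :: "edge \<Rightarrow> edge list" where
  "process_edge e = (case e of (a, b, P) \<Rightarrow>
     if P = {} then [(a, b, P)]
     else (let F = farthest a b P; f1 = first_along a b F; f2 = last_along a b F in
       if f1 = f2 then [(a, f1, right_of a f1 P), (f1, b, right_of f1 b P)]
       else [(a, f1, right_of a f1 P), (f1, f2, right_of f1 f2 P), (f2, b, right_of f2 b P)]))"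

definition qh_step :: "edge list \<Rightarrow> edge list" where
  "qh_step es = concat (map process_edge es)"

definition step_cost :: "edge list \<Rightarrow> nat" where
  "step_cost es = sum_list (map (\<lambda>(a, b, P). if P = {} then 0 else card P + 1) es)"

definition qh_time :: "pt set \<Rightarrow> nat \<Rightarrow> nat" where
  "qh_time S N = card S + (\<Sum>k<N. step_cost ((qh_step ^^ k) (qh_init S)))"

definition qh_space :: "edge list \<Rightarrow> nat" where
  "qh_space es = length es + sum_list (map (\<lambda>(a, b, P). card P) es)"

definition qh_finished :: "edge list \<Rightarrow> bool" where
  "qh_finished es \<longleftrightarrow> (\<forall>(a, b, P) \<in> set es. P = {})"

definition qh_vertices :: "edge list \<Rightarrow> pt set" where
  "qh_vertices es = fst ` set es"

end

theory Submission
  imports Defs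
begin

text \<open>
  The points stored with an edge \<open>a b\<close> of the partial hull are always exactly the points of \<open>S\<close>
  strictly outside \<open>a b\<close> in some triangle \<open>a b c\<close>. Heights above \<open>a b\<close> of lattice points are
  multiples of the gcd \<open>g\<close> of the coordinates of \<open>b - a\<close>; let \<open>h = m g\<close> be the largest height of a
  stored point and \<open>f\<close> the first point at that height. By digital convexity the lattice points of
  the triangle \<open>a b f\<close> strictly between heights \<open>0\<close> and \<open>h\<close> are stored with \<open>a b\<close>, and all of them
  are discarded when the edge is processed; a parallelogram argument shows that there are at least
  \<open>(m - 1) g / 2\<close> of them. The stored points below height \<open>h\<close> lie on \<open>m - 1\<close> lattice lines parallel
  to \<open>a b\<close>, each meeting the triangle \<open>a b c\<close> in at most \<open>2 g + 1\<close> points. Hence processing an edge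
  with \<open>n\<close> stored points costs \<open>n + 1\<close> and discards at least \<open>(n + 1) / 7\<close> of them, so seven times the
  number of stored points is a potential that pays for the whole run; initially it is at most
  \<open>28 |S|\<close>.
\<close>

section \<open>Triangles in the real plane\<close>

definition real_cross :: "real \<times> real \<Rightarrow> real \<times> real \<Rightarrow> real" where
  "real_cross u v = fst u * snd v - snd u * fst v"

lemma real_cross_rpt: "real_cross (rpt p - rpt q) (rpt r - rpt s) = of_int (cross (p - q) (r - s))"
  by (simp add: real_cross_def rpt_def cross_def)

lemma real_cross_outd: "real_cross (rpt p - rpt a) (rpt b - rpt a) = of_int (outd a b p)"
  by (simp add: real_cross_rpt outd_def)

lemma rpt_eq_iff: "rpt p = rpt q \<longleftrightarrow> p = q"
  by (auto simp: rpt_def prod_eq_iff)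

lemma convex_hull_3_coordsI:
  fixes u v :: real
  assumes "0 \<le> u" "0 \<le> v" "u + v \<le> 1"
    and "fst p = fst A + u * (fst B - fst A) + v * (fst C - fst A)"
    and "snd p = snd A + u * (snd B - snd A) + v * (snd C - snd A)"
  shows "p \<in> convex hull {A, B, C}"
proof -
  have "p = A + u *\<^sub>R (B - A) + v *\<^sub>R (C - A)"
    using assms(4,5) by (simp add: prod_eq_iff)
  then show ?thesis
    unfolding convex_hull_3_alt using assms(1-3) by blast
qed

lemma convex_hull_3_coordsE:
  fixes A B C p :: "real \<times> real"
  assumes "p \<in> convex hull {A, B, C}"
  obtains u v where "0 \<le> u" "0 \<le> v" "u + v \<le> 1"
    "fst p = fst A + u * (fst B - fst A) + v * (fst C - fst A)"
    "snd p = snd A + u * (snd B - snd A) + v * (snd C - snd A)"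
proof -
  obtain u v where "0 \<le> u" "0 \<le> v" "u + v \<le> 1" "p = A + u *\<^sub>R (B - A) + v *\<^sub>R (C - A)"
    using assms unfolding convex_hull_3_alt by blast
  then show thesis
    using that[of u v] by simp
qed

lemma real_cross_cramer:
  "real_cross (C - A) (B - A) *\<^sub>R (p - A) =
     real_cross (C - A) (p - A) *\<^sub>R (B - A) + real_cross (p - A) (B - A) *\<^sub>R (C - A)"
  by (simp add: real_cross_def prod_eq_iff algebra_simps)

lemma real_cross_minus_right: "real_cross u (- v) = - real_cross u v"
  by (simp add: real_cross_def)

lemma real_cross_swap_base: "real_cross (p - B) (A - B) = - real_cross (p - A) (B - A)"
  by (simp add: real_cross_def algebra_simps)

lemma real_cross_swap_apex: "real_cross (p - B) (X - B) = - real_cross (p - X) (B - X)"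
  by (simp add: real_cross_def algebra_simps)

text \<open>The coordinates of \<open>p\<close> in the triangle \<open>A B C\<close> are ratios of cross products (Cramer's rule).\<close>

lemma convex_hull_3_crossI:
  assumes "real_cross (C - A) (B - A) > 0"
    and "real_cross (C - A) (p - A) \<ge> 0" and "real_cross (p - A) (B - A) \<ge> 0"
    and "real_cross (C - A) (p - A) + real_cross (p - A) (B - A) \<le> real_cross (C - A) (B - A)"
  shows "p \<in> convex hull {A, B, C}"
proof -
  define D where "D = real_cross (C - A) (B - A)"
  define u where "u = real_cross (C - A) (p - A) / D"
  define v where "v = real_cross (p - A) (B - A) / D"
  have "D *\<^sub>R (p - A) = D *\<^sub>R (u *\<^sub>R (B - A) + v *\<^sub>R (C - A))"
    using real_cross_cramer[of C A B p] assms(1) by (simp add: u_def v_def D_def scaleR_add_right)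
  then have "p - A = u *\<^sub>R (B - A) + v *\<^sub>R (C - A)"
    using assms(1) by (simp add: D_def)
  then have "p = A + u *\<^sub>R (B - A) + v *\<^sub>R (C - A)"
    by (simp add: diff_eq_eq add.commute add.left_commute)
  moreover have "0 \<le> u" "0 \<le> v" "u + v \<le> 1"
    using assms by (simp_all add: u_def v_def D_def field_simps)
  ultimately show ?thesis
    unfolding convex_hull_3_alt by blast
qed

lemma apex_height_pos:
  assumes "p \<in> convex hull {A, B, C}" and "real_cross (p - A) (B - A) > 0"
  shows "real_cross (C - A) (B - A) > 0"
proof -
  obtain u v where "0 \<le> v"
    and x: "fst p = fst A + u * (fst B - fst A) + v * (fst C - fst A)"
    and y: "snd p = snd A + u * (snd B - snd A) + v * (snd C - snd A)"
    using convex_hull_3_coordsE[OF assms(1)] by metis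
  have "real_cross (p - A) (B - A) = v * real_cross (C - A) (B - A)"
    unfolding real_cross_def by (simp add: x y algebra_simps)
  then show ?thesis
    using assms(2) \<open>0 \<le> v\<close> by (simp add: zero_less_mult_iff)
qed

lemma triangle_level_diff:
  assumes D: "real_cross (C - A) (B - A) > 0"
    and p: "p \<in> convex hull {A, B, C}" and q: "q \<in> convex hull {A, B, C}"
    and level: "real_cross (p - A) (B - A) = real_cross (q - A) (B - A)"
  shows "\<exists>l. \<bar>l\<bar> \<le> 1 \<and> fst q - fst p = l * (fst B - fst A) \<and> snd q - snd p = l * (snd B - snd A)"
proof -
  obtain u1 v1 where x: "0 \<le> u1" "0 \<le> v1" "u1 + v1 \<le> 1"
    "fst p = fst A + u1 * (fst B - fst A) + v1 * (fst C - fst A)"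
    "snd p = snd A + u1 * (snd B - snd A) + v1 * (snd C - snd A)"
    by (rule convex_hull_3_coordsE[OF p])
  obtain u2 v2 where y: "0 \<le> u2" "0 \<le> v2" "u2 + v2 \<le> 1"
    "fst q = fst A + u2 * (fst B - fst A) + v2 * (fst C - fst A)"
    "snd q = snd A + u2 * (snd B - snd A) + v2 * (snd C - snd A)"
    by (rule convex_hull_3_coordsE[OF q])
  have "real_cross (p - A) (B - A) = v1 * real_cross (C - A) (B - A)"
    and "real_cross (q - A) (B - A) = v2 * real_cross (C - A) (B - A)"
    unfolding real_cross_def by (simp_all add: x(4,5) y(4,5) algebra_simps)
  then have "v1 = v2"
    using level D by simp
  then show ?thesis
    using x y by (intro exI[of _ "u2 - u1"]) (auto simp: algebra_simps)
qed

text \<open>Cutting the triangle \<open>A B C\<close> at the height \<open>h\<close> of one of its points \<open>X\<close>: the part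
  right of \<open>A X\<close> is the triangle \<open>A X C\<^sub>1\<close>, where \<open>C\<^sub>1\<close> is the point of \<open>A C\<close> at height \<open>h\<close>.\<close>

lemma left_subtriangleI:
  assumes D: "real_cross (C - A) (B - A) > 0"
    and X: "X \<in> convex hull {A, B, C}" and hX: "real_cross (X - A) (B - A) = h" and h: "h > 0"
    and p: "p \<in> convex hull {A, B, C}" and pl: "real_cross (p - A) (B - A) \<le> h"
    and pr: "real_cross (p - A) (X - A) > 0"
  shows "p \<in> convex hull {A, X, A + (h / real_cross (C - A) (B - A)) *\<^sub>R (C - A)}"
proof -
  define D where "D = real_cross (C - A) (B - A)"
  obtain ux vx where x: "0 \<le> ux" "0 \<le> vx" "ux + vx \<le> 1"
    "fst X = fst A + ux * (fst B - fst A) + vx * (fst C - fst A)"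
    "snd X = snd A + ux * (snd B - snd A) + vx * (snd C - snd A)"
    using convex_hull_3_coordsE[OF X] by blast
  obtain up vp where q: "0 \<le> up" "0 \<le> vp" "up + vp \<le> 1"
    "fst p = fst A + up * (fst B - fst A) + vp * (fst C - fst A)"
    "snd p = snd A + up * (snd B - snd A) + vp * (snd C - snd A)"
    using convex_hull_3_coordsE[OF p] by blast
  have D_pos: "D > 0"
    using D D_def by simp
  have "real_cross (X - A) (B - A) = vx * D"
    unfolding D_def real_cross_def by (simp add: x(4,5) algebra_simps)
  then have hx: "vx * D = h"
    using hX by simp
  then have vx: "vx = h / D"
    using D_pos by (simp add: field_simps)
  have vx_pos: "vx > 0"
    using vx h D_pos by simp
  have "real_cross (p - A) (B - A) = vp * D"
    unfolding D_def real_cross_def by (simp add: q(4,5) algebra_simps)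
  then have vp_le: "vp \<le> vx"
    using pl hx D_pos by (metis mult_right_le_imp_le)
  have "real_cross (p - A) (X - A) = (vp * ux - up * vx) * D"
    unfolding D_def real_cross_def by (simp add: q(4,5) x(4,5) algebra_simps)
  then have key: "vp * ux > up * vx"
    using pr D_pos by (simp add: zero_less_mult_iff)
  have "up * vx \<ge> 0"
    using q(1) vx_pos by simp
  then have ux_pos: "ux > 0"
    using key x(1) by (cases "ux = 0") auto
  define u where "u = up / ux"
  define v where "v = vp / vx - up / ux"
  have "0 \<le> u" "0 \<le> v" "u + v \<le> 1"
    unfolding u_def v_def using q(1) key ux_pos vx_pos vp_le by (simp_all add: field_simps)
  then show ?thesis
    by (rule convex_hull_3_coordsI)
      (use ux_pos vx_pos in \<open>simp_all add: q(4,5) x(4,5) u_def v_def D_def[symmetric] vx[symmetric] field_simps\<close>)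
qed

lemma left_subtriangleD:
  assumes D: "real_cross (C - A) (B - A) > 0"
    and X: "X \<in> convex hull {A, B, C}" and hX: "real_cross (X - A) (B - A) = h"
    and p: "p \<in> convex hull {A, X, A + (h / real_cross (C - A) (B - A)) *\<^sub>R (C - A)}"
    and pr: "real_cross (p - A) (X - A) > 0"
  shows "p \<in> convex hull {A, B, C} \<and> real_cross (p - A) (B - A) > 0"
proof -
  define D where "D = real_cross (C - A) (B - A)"
  obtain ux vx where x: "0 \<le> ux" "0 \<le> vx" "ux + vx \<le> 1"
    "fst X = fst A + ux * (fst B - fst A) + vx * (fst C - fst A)"
    "snd X = snd A + ux * (snd B - snd A) + vx * (snd C - snd A)"
    using convex_hull_3_coordsE[OF X] by blast
  have D_pos: "D > 0"
    using D D_def by simp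
  have "real_cross (X - A) (B - A) = vx * D"
    unfolding D_def real_cross_def by (simp add: x(4,5) algebra_simps)
  then have vx: "h / D = vx"
    using hX D_pos by (simp add: field_simps)
  obtain m n where q: "0 \<le> m" "0 \<le> n" "m + n \<le> 1"
    "fst p = fst A + m * (fst X - fst A) + n * (vx * (fst C - fst A))"
    "snd p = snd A + m * (snd X - snd A) + n * (vx * (snd C - snd A))"
    using convex_hull_3_coordsE[OF p] unfolding D_def[symmetric] vx by auto
  have "real_cross (p - A) (X - A) = n * vx * ux * D"
    unfolding D_def real_cross_def by (simp add: q(4,5) x(4,5) algebra_simps)
  then have n_pos: "n > 0" and vx_pos: "vx > 0"
    using pr q(2) x(1,2) D_pos by (auto simp: zero_less_mult_iff)
  define u where "u = m * ux"
  define v where "v = (m + n) * vx"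
  have "m * (ux + vx) \<le> m" "n * vx \<le> n"
    using q(1,2) x(1,3) by (simp_all add: mult_left_le)
  then have "0 \<le> u" "0 \<le> v" "u + v \<le> 1"
    unfolding u_def v_def using q x(1,2) by (simp_all add: algebra_simps)
  then have "p \<in> convex hull {A, B, C}"
    by (rule convex_hull_3_coordsI) (simp_all add: q(4,5) x(4,5) u_def v_def algebra_simps)
  moreover have "real_cross (p - A) (B - A) = v * D"
    unfolding D_def real_cross_def v_def by (simp add: q(4,5) x(4,5) algebra_simps)
  moreover have "v > 0"
    unfolding v_def using n_pos q(1) vx_pos by simp
  ultimately show ?thesis
    using D_pos by simp
qed

definition mirror :: "real \<times> real \<Rightarrow> real \<times> real" where
  "mirror x = (- fst x, snd x)"

lemma mirror_in_triangle_iff: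
  "mirror p \<in> convex hull {mirror A, mirror B, mirror C} \<longleftrightarrow> p \<in> convex hull {A, B, C}"
proof -
  have "linear mirror"
    by (rule linearI) (simp_all add: mirror_def)
  then have "convex hull {mirror A, mirror B, mirror C} = mirror ` (convex hull {A, B, C})"
    using convex_hull_linear_image[of mirror "{A, B, C}"] by simp
  moreover have "inj mirror"
    by (rule injI) (simp add: mirror_def prod_eq_iff)
  ultimately show ?thesis
    by (simp add: inj_image_mem_iff)
qed

lemma mirror_diff: "mirror u - mirror v = mirror (u - v)"
  by (simp add: mirror_def)

lemma real_cross_mirror: "real_cross (mirror u) (mirror v) = - real_cross u v"
  by (simp add: real_cross_def mirror_def)

text \<open>The mirror image of \<open>left_subtriangleI\<close>, with the roles of \<open>A\<close> and \<open>B\<close> exchanged.\<close>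

lemma right_subtriangleI:
  assumes D: "real_cross (C - A) (B - A) > 0"
    and X: "X \<in> convex hull {A, B, C}" and hX: "real_cross (X - A) (B - A) = h" and h: "h > 0"
    and p: "p \<in> convex hull {A, B, C}" and pl: "real_cross (p - A) (B - A) \<le> h"
    and pr: "real_cross (p - X) (B - X) > 0"
  shows "p \<in> convex hull {X, B, B + (h / real_cross (C - A) (B - A)) *\<^sub>R (C - B)}"
proof -
  have "mirror p \<in> convex hull {mirror B, mirror X,
      mirror B + (h / real_cross (mirror C - mirror B) (mirror A - mirror B)) *\<^sub>R (mirror C - mirror B)}"
  proof (rule left_subtriangleI)
    show "mirror X \<in> convex hull {mirror B, mirror A, mirror C}"
      "mirror p \<in> convex hull {mirror B, mirror A, mirror C}"
      using X p by (simp_all add: mirror_in_triangle_iff insert_commute)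
    show "real_cross (mirror p - mirror B) (mirror X - mirror B) > 0"
      using pr by (simp add: mirror_diff real_cross_mirror real_cross_swap_apex[of p B X])
  qed (use D hX h pl in \<open>simp_all add: mirror_diff real_cross_mirror real_cross_swap_base[of _ B A]\<close>)
  also have "mirror B + (h / real_cross (mirror C - mirror B) (mirror A - mirror B)) *\<^sub>R (mirror C - mirror B)
      = mirror (B + (h / real_cross (C - A) (B - A)) *\<^sub>R (C - B))"
    by (simp add: mirror_diff real_cross_mirror real_cross_swap_base[of _ B A]) (simp add: mirror_def algebra_simps diff_divide_distrib)
  finally show ?thesis
    by (simp add: mirror_in_triangle_iff insert_commute)
qed

lemma right_subtriangleD:
  assumes D: "real_cross (C - A) (B - A) > 0"
    and X: "X \<in> convex hull {A, B, C}" and hX: "real_cross (X - A) (B - A) = h"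
    and p: "p \<in> convex hull {X, B, B + (h / real_cross (C - A) (B - A)) *\<^sub>R (C - B)}"
    and pr: "real_cross (p - X) (B - X) > 0"
  shows "p \<in> convex hull {A, B, C} \<and> real_cross (p - A) (B - A) > 0"
proof -
  have "mirror B + (h / real_cross (mirror C - mirror B) (mirror A - mirror B)) *\<^sub>R (mirror C - mirror B)
      = mirror (B + (h / real_cross (C - A) (B - A)) *\<^sub>R (C - B))"
    by (simp add: mirror_diff real_cross_mirror real_cross_swap_base[of _ B A]) (simp add: mirror_def algebra_simps diff_divide_distrib)
  note apex = this
  have "mirror p \<in> convex hull {mirror B, mirror A, mirror C} \<and>
      real_cross (mirror p - mirror B) (mirror A - mirror B) > 0"
  proof (rule left_subtriangleD)
    show "mirror X \<in> convex hull {mirror B, mirror A, mirror C}"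
      using X by (simp add: mirror_in_triangle_iff insert_commute)
    show "mirror p \<in> convex hull {mirror B, mirror X,
        mirror B + (h / real_cross (mirror C - mirror B) (mirror A - mirror B)) *\<^sub>R (mirror C - mirror B)}"
      unfolding apex using p by (simp add: mirror_in_triangle_iff insert_commute)
    show "real_cross (mirror p - mirror B) (mirror X - mirror B) > 0"
      using pr by (simp add: mirror_diff real_cross_mirror real_cross_swap_apex[of p B X])
  qed (use D hX in \<open>simp_all add: mirror_diff real_cross_mirror real_cross_swap_base[of _ B A]\<close>)
  then show ?thesis
    by (simp add: mirror_in_triangle_iff insert_commute mirror_diff real_cross_mirror real_cross_swap_base[of _ B A])
qed

text \<open>If the line through \<open>A\<close> with direction \<open>d\<close> supports the point set and \<open>M\<close> is a point
  farthest from \<open>A B\<close>, the points right of \<open>A M\<close> lie in the triangle cut off by the parallel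
  to \<open>A B\<close> through \<open>M\<close>.\<close>

lemma left_support_triangleI:
  assumes H: "real_cross (M - A) (B - A) > 0"
    and V: "real_cross (p - A) (B - A) \<le> real_cross (M - A) (B - A)"
    and Z: "real_cross (p - A) (M - A) > 0"
    and supp: "real_cross (p - A) d \<le> 0" and Kb: "real_cross (B - A) d < 0"
    and Km: "real_cross (M - A) d \<le> 0"
  shows "p \<in> convex hull {A, M, M + (real_cross (M - A) d / real_cross (B - A) d) *\<^sub>R (A - B)}"
    (is "_ \<in> convex hull {_, _, ?C}")
proof -
  define K where "K = real_cross (M - A) d / real_cross (B - A) d"
  have "real_cross (M - A) (B - A) * real_cross (p - A) d =
      real_cross (p - A) (B - A) * real_cross (M - A) d - real_cross (p - A) (M - A) * real_cross (B - A) d"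
    by (simp add: real_cross_def algebra_simps)
  moreover have "real_cross (M - A) (B - A) * real_cross (p - A) d \<le> 0"
    using H supp by (simp add: mult_nonneg_nonpos)
  ultimately have "real_cross (p - A) (B - A) * real_cross (M - A) d \<le> real_cross (p - A) (M - A) * real_cross (B - A) d"
    by linarith
  then have ZK: "real_cross (p - A) (M - A) \<le> K * real_cross (p - A) (B - A)"
    using Kb by (simp add: K_def field_simps)
  have "real_cross (M - A) d < 0"
  proof (rule ccontr)
    assume "\<not> real_cross (M - A) d < 0"
    then have "K = 0"
      using Km by (simp add: K_def)
    then show False
      using ZK Z by simp
  qed
  then have K_pos: "K > 0"
    using Kb by (simp add: K_def divide_neg_neg)
  have C: "?C = M + K *\<^sub>R (A - B)"
    by (simp add: K_def)
  have "real_cross (?C - A) (M - A) = K * real_cross (M - A) (B - A)"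
    and "real_cross (?C - A) (p - A) = K * real_cross (p - A) (B - A) - real_cross (p - A) (M - A)"
    unfolding C by (simp_all add: real_cross_def algebra_simps)
  then show ?thesis
    using H V Z ZK K_pos by (intro convex_hull_3_crossI) (simp_all add: mult_left_mono)
qed

lemma right_support_triangleI:
  assumes H: "real_cross (M - A) (B - A) > 0"
    and V: "real_cross (p - A) (B - A) \<le> real_cross (M - A) (B - A)"
    and Z: "real_cross (p - M) (B - M) > 0"
    and supp: "real_cross (p - B) d \<le> 0" and Ka: "real_cross (A - B) d < 0"
    and Km: "real_cross (M - B) d \<le> 0"
  shows "p \<in> convex hull {M, B, M + (real_cross (M - B) d / real_cross (A - B) d) *\<^sub>R (B - A)}"
proof -
  have "mirror p \<in> convex hull {mirror B, mirror M, mirror M +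
      (real_cross (mirror M - mirror B) (- mirror d) / real_cross (mirror A - mirror B) (- mirror d)) *\<^sub>R
      (mirror B - mirror A)}"
  proof (rule left_support_triangleI)
    show "real_cross (mirror p - mirror B) (mirror M - mirror B) > 0"
      using Z by (simp add: mirror_diff real_cross_mirror real_cross_swap_apex[of p B M])
  qed (use H V supp Ka Km in \<open>simp_all add: mirror_diff real_cross_mirror real_cross_swap_base[of _ B A] real_cross_minus_right\<close>)
  also have "mirror M + (real_cross (mirror M - mirror B) (- mirror d) /
      real_cross (mirror A - mirror B) (- mirror d)) *\<^sub>R (mirror B - mirror A) =
      mirror (M + (real_cross (M - B) d / real_cross (A - B) d) *\<^sub>R (B - A))"
    by (simp add: mirror_diff real_cross_mirror real_cross_minus_right) (simp add: mirror_def algebra_simps diff_divide_distrib)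
  finally show ?thesis
    by (simp add: mirror_in_triangle_iff insert_commute)
qed

section \<open>Lattice points\<close>

lemma outd_eq: "outd a b p = (fst p - fst a) * (snd b - snd a) - (snd p - snd a) * (fst b - fst a)"
  by (simp add: outd_def cross_def)

lemma outd_swap: "outd b a p = - outd a b p"
  by (simp add: outd_eq algebra_simps)

lemma outd_via_apex: "outd f b p = outd a b p - outd a f p - outd a b f"
  by (simp add: outd_eq algebra_simps)

lemma rpt_in_triangleI:
  assumes "outd a b f > 0" and "outd a b p \<ge> 0" and "outd a f p \<le> 0" and "outd f b p \<le> 0"
  shows "rpt p \<in> convex hull {rpt a, rpt b, rpt f}"
proof (rule convex_hull_3_crossI)
  have "real_cross (rpt f - rpt a) (rpt p - rpt a) = - of_int (outd a f p)"
    by (simp add: real_cross_rpt outd_def cross_def algebra_simps)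
  then show "real_cross (rpt f - rpt a) (rpt p - rpt a) \<ge> 0"
    and "real_cross (rpt f - rpt a) (rpt p - rpt a) + real_cross (rpt p - rpt a) (rpt b - rpt a)
      \<le> real_cross (rpt f - rpt a) (rpt b - rpt a)"
    using assms outd_via_apex[of f b p a] by (simp_all add: real_cross_outd)
qed (use assms in \<open>simp_all add: real_cross_outd\<close>)

lemma gcd_dvd_outd: "gcd (fst (b - a)) (snd (b - a)) dvd outd a b p"
  unfolding outd_def cross_def by (simp add: dvd_diff)

text \<open>The integer \<open>k\<close> is \<open>l g\<close>, computed from Bezout coefficients of the coordinates of \<open>b - a\<close>.\<close>

lemma lattice_multiple:
  fixes a b p q :: pt and g :: int
  defines "g \<equiv> gcd (fst (b - a)) (snd (b - a))"
  assumes l: "\<bar>l\<bar> \<le> 1" and eq: "rpt q - rpt p = l *\<^sub>R (rpt b - rpt a)"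
  shows "\<exists>k. \<bar>k\<bar> \<le> g \<and> g * fst (q - p) = k * fst (b - a) \<and> g * snd (q - p) = k * snd (b - a)"
proof -
  obtain u v where bezout: "u * fst (b - a) + v * snd (b - a) = g"
    unfolding g_def using bezout_int by blast
  have ex: "real_of_int (fst q - fst p) = l * real_of_int (fst b - fst a)"
    and ey: "real_of_int (snd q - snd p) = l * real_of_int (snd b - snd a)"
    using eq by (simp_all add: rpt_def prod_eq_iff)
  define k where "k = u * fst (q - p) + v * snd (q - p)"
  have "real_of_int k = real_of_int u * real_of_int (fst q - fst p) + real_of_int v * real_of_int (snd q - snd p)"
    unfolding k_def by simp
  also have "\<dots> = l * real_of_int (u * fst (b - a) + v * snd (b - a))"
    unfolding ex ey by (simp add: algebra_simps)
  finally have k: "real_of_int k = l * real_of_int g"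
    by (simp only: bezout)
  have "real_of_int (g * fst (q - p)) = real_of_int (k * fst (b - a))"
    and "real_of_int (g * snd (q - p)) = real_of_int (k * snd (b - a))"
    unfolding k of_int_mult fst_diff snd_diff ex ey by (simp_all add: algebra_simps)
  moreover have "\<bar>real_of_int k\<bar> \<le> real_of_int g"
    unfolding k using l by (simp add: abs_mult g_def mult_left_le_one_le)
  ultimately show ?thesis
    by (intro exI[of _ k]) (simp only: of_int_eq_iff of_int_abs of_int_le_iff, simp)
qed

lemma outd_dotp_inj:
  assumes "a \<noteq> b" and "outd a b p = outd a b q" and "dotp (b - a) p = dotp (b - a) q"
  shows "p = q"
proof -
  define x y where "x = fst b - fst a" and "y = snd b - snd a"
  define dx dy where "dx = fst q - fst p" and "dy = snd q - snd p"
  have c: "dx * y - dy * x = 0" and d: "x * dx + y * dy = 0"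
    using assms(2,3) by (simp_all add: outd_eq dotp_def x_def y_def dx_def dy_def algebra_simps)
  have "dx * (x * x + y * y) = x * (x * dx + y * dy) + y * (dx * y - dy * x)"
    and "dy * (x * x + y * y) = y * (x * dx + y * dy) - x * (dx * y - dy * x)"
    by (simp_all add: algebra_simps)
  moreover have "x * x + y * y \<noteq> 0"
    using assms(1) by (auto simp: x_def y_def prod_eq_iff)
  ultimately have "dx = 0" "dy = 0"
    using c d by auto
  then show ?thesis
    by (simp add: dx_def dy_def prod_eq_iff)
qed

lemma first_along_least:
  assumes "finite F" and "F \<noteq> {}" and "a \<noteq> b"
    and level: "\<And>p q. p \<in> F \<Longrightarrow> q \<in> F \<Longrightarrow> outd a b p = outd a b q"
  shows "first_along a b F \<in> F \<and> (\<forall>q\<in>F. dotp (b - a) (first_along a b F) \<le> dotp (b - a) q)"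
proof -
  have "Min (dotp (b - a) ` F) \<in> dotp (b - a) ` F"
    using assms(1,2) by (intro Min_in) auto
  then obtain f where f: "f \<in> F" "dotp (b - a) f = Min (dotp (b - a) ` F)"
    by (metis imageE)
  have least: "dotp (b - a) f \<le> dotp (b - a) q" if "q \<in> F" for q
    unfolding f(2) using that assms(1) by (intro Min_le) auto
  show ?thesis
    unfolding first_along_def
  proof (rule theI2[of _ f])
    show "f \<in> F \<and> (\<forall>q\<in>F. dotp (b - a) f \<le> dotp (b - a) q)"
      using f(1) least by blast
    show "x = f" if x: "x \<in> F \<and> (\<forall>q\<in>F. dotp (b - a) x \<le> dotp (b - a) q)" for x
    proof (rule outd_dotp_inj[OF \<open>a \<noteq> b\<close>])
      show "outd a b x = outd a b f"
        using x f(1) by (blast intro: level)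
      show "dotp (b - a) x = dotp (b - a) f"
        using x f(1) least[of x] by (simp add: order_antisym)
    qed
  qed blast
qed

lemma last_along_eq_first_along: "last_along a b F = first_along b a F"
proof -
  have "dotp (a - b) x = - dotp (b - a) x" for x
    by (simp add: dotp_def algebra_simps)
  then show ?thesis
    unfolding last_along_def first_along_def by simp
qed

lemma last_along_greatest:
  assumes "finite F" and "F \<noteq> {}" and "a \<noteq> b"
    and level: "\<And>p q. p \<in> F \<Longrightarrow> q \<in> F \<Longrightarrow> outd a b p = outd a b q"
  shows "last_along a b F \<in> F \<and> (\<forall>q\<in>F. dotp (b - a) q \<le> dotp (b - a) (last_along a b F))"
proof -
  have "first_along b a F \<in> F \<and> (\<forall>q\<in>F. dotp (a - b) (first_along b a F) \<le> dotp (a - b) q)"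
  proof (rule first_along_least[OF assms(1,2)])
    show "outd b a p = outd b a q" if "p \<in> F" "q \<in> F" for p q
      using level[OF that] by (simp add: outd_swap[of a b])
  qed (use assms(3) in simp)
  moreover have "dotp (a - b) x = - dotp (b - a) x" for x
    by (simp add: dotp_def algebra_simps)
  ultimately show ?thesis
    unfolding last_along_eq_first_along by simp
qed

text \<open>A point of \<open>L\<close> is determined by its offset from a fixed one, an integer multiple of
  \<open>(b - a) / g\<close> computed from Bezout coefficients.\<close>

lemma card_level_le:
  fixes a b :: pt and g :: int
  defines "g \<equiv> gcd (fst (b - a)) (snd (b - a))"
  assumes "finite L" and "a \<noteq> b"
    and width: "\<And>p q. p \<in> L \<Longrightarrow> q \<in> L \<Longrightarrow>
       \<exists>k. \<bar>k\<bar> \<le> g \<and> g * fst (q - p) = k * fst (b - a) \<and> g * snd (q - p) = k * snd (b - a)"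
  shows "card L \<le> nat (2 * g + 1)"
proof (cases "L = {}")
  case False
  then obtain q where q: "q \<in> L"
    by blast
  have g_pos: "g > 0"
    using \<open>a \<noteq> b\<close> by (auto simp: g_def prod_eq_iff)
  obtain u v where bezout: "u * fst (b - a) + v * snd (b - a) = g"
    unfolding g_def using bezout_int by blast
  define offset where "offset p = u * fst (p - q) + v * snd (p - q)" for p
  have offset: "g * fst (p - q) = offset p * fst (b - a) \<and> g * snd (p - q) = offset p * snd (b - a) \<and>
      \<bar>offset p\<bar> \<le> g" if p: "p \<in> L" for p
  proof -
    obtain k where k: "\<bar>k\<bar> \<le> g" "g * fst (p - q) = k * fst (b - a)" "g * snd (p - q) = k * snd (b - a)"
      using width[OF q p] by blast
    have "g * offset p = u * (g * fst (p - q)) + v * (g * snd (p - q))"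
      unfolding offset_def by (simp add: algebra_simps)
    also have "\<dots> = k * (u * fst (b - a) + v * snd (b - a))"
      unfolding k(2,3) by (simp add: algebra_simps)
    also have "\<dots> = g * k"
      using bezout by (simp add: mult.commute)
    finally show ?thesis
      using k g_pos by simp
  qed
  have "inj_on offset L"
  proof (rule inj_onI)
    fix p p' assume "p \<in> L" "p' \<in> L" "offset p = offset p'"
    then have "g * fst (p - q) = g * fst (p' - q)" "g * snd (p - q) = g * snd (p' - q)"
      using offset by simp_all
    then show "p = p'"
      using g_pos by (simp add: prod_eq_iff)
  qed
  moreover have "offset ` L \<subseteq> {-g..g}"
  proof (rule image_subsetI)
    fix p assume "p \<in> L"
    then show "offset p \<in> {-g..g}"
      using offset[of p] by (simp add: abs_le_iff)
  qed
  ultimately have "card L \<le> card {-g..g}"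
    by (metis card_image card_mono finite_atLeastAtMost_int)
  then show ?thesis
    by simp
qed simp

lemma card_strip_le:
  fixes a b :: pt and g m :: int
  defines "g \<equiv> gcd (fst (b - a)) (snd (b - a))"
  assumes "finite P" and "a \<noteq> b" and "m \<ge> 1"
    and strip: "\<And>p. p \<in> P \<Longrightarrow> 0 < outd a b p \<and> outd a b p < m * g"
    and width: "\<And>p q. p \<in> P \<Longrightarrow> q \<in> P \<Longrightarrow> outd a b p = outd a b q \<Longrightarrow>
       \<exists>k. \<bar>k\<bar> \<le> g \<and> g * fst (q - p) = k * fst (b - a) \<and> g * snd (q - p) = k * snd (b - a)"
  shows "int (card P) \<le> (m - 1) * (2 * g + 1)"
proof -
  have g_pos: "g > 0"
    using \<open>a \<noteq> b\<close> by (auto simp: g_def prod_eq_iff)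
  define level where "level i = {p \<in> P. outd a b p = i * g}" for i
  have "P \<subseteq> (\<Union>i\<in>{1..m - 1}. level i)"
  proof
    fix p assume p: "p \<in> P"
    obtain i where i: "outd a b p = i * g"
      using gcd_dvd_outd[of b a p] unfolding g_def by (metis dvd_def mult.commute)
    have "0 < i" "i < m"
      using strip[OF p] g_pos unfolding i by (simp_all add: zero_less_mult_iff)
    then show "p \<in> (\<Union>i\<in>{1..m - 1}. level i)"
      using p i by (auto simp: level_def)
  qed
  moreover have "finite (level i)" for i
    using \<open>finite P\<close> by (simp add: level_def)
  ultimately have "card P \<le> card (\<Union>i\<in>{1..m - 1}. level i)"
    by (intro card_mono) auto
  also have "\<dots> \<le> (\<Sum>i\<in>{1..m - 1}. card (level i))"
    by (rule card_UN_le) simp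
  also have "\<dots> \<le> of_nat (card {1..m - 1}) * nat (2 * g + 1)"
  proof (rule sum_bounded_above)
    fix i
    show "card (level i) \<le> nat (2 * g + 1)"
      unfolding g_def
    proof (rule card_level_le)
      show "\<exists>k. \<bar>k\<bar> \<le> gcd (fst (b - a)) (snd (b - a)) \<and>
          gcd (fst (b - a)) (snd (b - a)) * fst (q - p) = k * fst (b - a) \<and>
          gcd (fst (b - a)) (snd (b - a)) * snd (q - p) = k * snd (b - a)"
        if "p \<in> level i" "q \<in> level i" for p q
        using width that unfolding g_def level_def by simp
    qed (use \<open>finite P\<close> \<open>a \<noteq> b\<close> in \<open>simp_all add: level_def\<close>)
  qed
  finally show ?thesis
    using \<open>m \<ge> 1\<close> g_pos by (simp add: nat_mult_distrib[symmetric] le_nat_iff)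
qed

text \<open>Lattice points on the lines \<open>outd a b = i g\<close>: along such a line, a step by \<open>(b - a) / g\<close>
  changes \<open>outd a f\<close> by \<open>m\<close>, and a Bezout combination of the coordinates of \<open>b - a\<close> provides
  a lattice point on each line.\<close>

lemma lattice_grid:
  fixes a b f :: pt and g m :: int
  defines "g \<equiv> gcd (fst (b - a)) (snd (b - a))"
  assumes "a \<noteq> b" and apex: "outd a b f = m * g" and "m > 0"
  obtains point :: "int \<Rightarrow> int \<Rightarrow> pt" and r :: "int \<Rightarrow> int"
  where "\<And>i j. outd a b (point i j) = i * g"
    and "\<And>i j. outd a f (point i j) = - (r i + j * m)"
    and "\<And>i. 0 \<le> r i \<and> r i < m"
proof -
  have g_pos: "g > 0"
    using \<open>a \<noteq> b\<close> by (auto simp: g_def prod_eq_iff)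
  obtain u v where bezout: "u * fst (b - a) + v * snd (b - a) = g"
    unfolding g_def using bezout_int by blast
  define wx wy where "wx = fst (b - a) div g" and "wy = snd (b - a) div g"
  have b_x: "fst (b - a) = g * wx" and b_y: "snd (b - a) = g * wy"
    unfolding wx_def wy_def g_def by simp_all
  define fx fy where "fx = fst (f - a)" and "fy = snd (f - a)"
  have "g * (fx * wy - fy * wx) = fx * snd (b - a) - fy * fst (b - a)"
    unfolding b_x b_y by (simp add: algebra_simps)
  also have "\<dots> = m * g"
    using apex by (simp add: outd_def cross_def fx_def fy_def)
  finally have det: "fx * wy - fy * wx = m"
    using g_pos by (simp add: mult.commute)
  define e where "e = - fx * u - fy * v"
  define point where "point i j =
      (fst a + i * v + (j - (i * e) div m) * wx, snd a - i * u + (j - (i * e) div m) * wy)" for i j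
  have "outd a b (point i j) = i * (u * fst (b - a) + v * snd (b - a))" for i j
    unfolding outd_def cross_def point_def b_x b_y by (simp add: algebra_simps)
  then have level: "outd a b (point i j) = i * g" for i j
    using bezout by simp
  have side: "outd a f (point i j) = - ((i * e) mod m + j * m)" for i j
  proof -
    have "outd a f (point i j) = - (i * e + (j - (i * e) div m) * (fx * wy - fy * wx))"
      unfolding outd_eq point_def e_def fx_def fy_def by (simp add: algebra_simps)
    also have "\<dots> = - (i * e - (i * e) div m * m + j * m)"
      unfolding det by (simp add: algebra_simps)
    finally show ?thesis
      by (simp add: minus_div_mult_eq_mod)
  qed
  then show thesis
    using that[of point "\<lambda>i. (i * e) mod m"] level \<open>m > 0\<close> by simp
qed

lemma card_parallelogram_ge:
  fixes a b f :: pt and g m :: int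
  defines "g \<equiv> gcd (fst (b - a)) (snd (b - a))"
  assumes "a \<noteq> b" and apex: "outd a b f = m * g" and "m \<ge> 1" and "finite X"
    and sub: "{p. 0 < outd a b p \<and> outd a b p < m * g \<and> - (m * g) \<le> outd a f p \<and> outd a f p \<le> 0} \<subseteq> X"
  shows "(m - 1) * g \<le> int (card X)"
proof -
  have g_pos: "g > 0"
    using \<open>a \<noteq> b\<close> by (auto simp: g_def prod_eq_iff)
  have m_pos: "m > 0"
    using \<open>m \<ge> 1\<close> by simp
  obtain point r where level: "\<And>i j. outd a b (point i j) = i * g"
    and side: "\<And>i j. outd a f (point i j) = - (r i + j * m)" and r: "\<And>i. 0 \<le> r i \<and> r i < m"
    using lattice_grid[OF \<open>a \<noteq> b\<close> apex[unfolded g_def] m_pos] unfolding g_def[symmetric] by blast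
  define D where "D = {1..m - 1} \<times> {0..g - 1}"
  have "inj_on (case_prod point) D"
  proof (rule inj_onI)
    fix x y assume "x \<in> D" "y \<in> D" and eq: "case_prod point x = case_prod point y"
    obtain i j i' j' where x: "x = (i, j)" and y: "y = (i', j')"
      by fastforce
    have same: "point i j = point i' j'"
      using eq by (simp add: x y)
    then have "i * g = i' * g"
      by (metis level)
    then have "i = i'"
      using g_pos by simp
    moreover have "r i + j * m = r i + j' * m"
      using same \<open>i = i'\<close> by (metis side neg_equal_iff_equal)
    ultimately show "x = y"
      using m_pos by (simp add: x y)
  qed
  moreover have "case_prod point ` D \<subseteq> X"
  proof
    fix x assume "x \<in> case_prod point ` D"
    then obtain i j where i: "1 \<le> i" "i \<le> m - 1" and j: "0 \<le> j" "j \<le> g - 1" and x: "x = point i j"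
      unfolding D_def by auto
    have "j * m \<le> (g - 1) * m"
      using j m_pos by (simp add: mult_right_mono)
    then have "0 \<le> r i + j * m" "r i + j * m \<le> m * g"
      using r[of i] j m_pos by (simp_all add: algebra_simps)
    moreover have "0 < i * g" "i * g < m * g"
      using i g_pos by (auto simp: mult_strict_right_mono)
    ultimately show "x \<in> X"
      using sub unfolding x by (auto simp: level side)
  qed
  ultimately have "card D \<le> card X"
    using \<open>finite X\<close> by (metis card_image card_mono)
  moreover have "int (card D) = (m - 1) * g"
    unfolding D_def using \<open>m \<ge> 1\<close> g_pos by (simp add: card_cartesian_product)
  ultimately show ?thesis
    by linarith
qed

text \<open>The point reflection \<open>p \<mapsto> b + f - p\<close> maps the parallelogram spanned by \<open>b - a\<close> and
  \<open>f - a\<close> onto itself and exchanges its two halves, one of which is the triangle \<open>a b f\<close>.\<close>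

lemma card_lattice_triangle_ge:
  fixes a b f :: pt and g m :: int
  defines "g \<equiv> gcd (fst (b - a)) (snd (b - a))"
  assumes "a \<noteq> b" and apex: "outd a b f = m * g" and "m \<ge> 1" and "finite T"
    and T: "T = {p. 0 < outd a b p \<and> outd a b p < m * g \<and> outd a f p \<le> 0 \<and> outd f b p \<le> 0}"
  shows "(m - 1) * g \<le> 2 * int (card T)"
proof -
  define reflect where "reflect p = (fst b + fst f - fst p, snd b + snd f - snd p)" for p :: pt
  have reflect_level: "outd a b (reflect p) = m * g - outd a b p"
    and reflect_side: "outd a f (reflect p) = - (m * g) - outd a f p" for p
    using apex by (simp_all add: outd_eq reflect_def algebra_simps)
  have "{p. 0 < outd a b p \<and> outd a b p < m * g \<and> - (m * g) \<le> outd a f p \<and> outd a f p \<le> 0}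
      \<subseteq> T \<union> reflect ` T"
  proof safe
    fix p assume p: "0 < outd a b p" "outd a b p < m * g" "- (m * g) \<le> outd a f p" "outd a f p \<le> 0"
      and "p \<notin> reflect ` T"
    moreover have "reflect (reflect p) = p"
      by (simp add: reflect_def)
    ultimately have "reflect p \<notin> T"
      by (metis image_eqI)
    then show "p \<in> T"
      using p apex outd_via_apex[of f b p a] outd_via_apex[of f b "reflect p" a]
      unfolding T by (simp add: reflect_level reflect_side mult.commute)
  qed
  then have "(m - 1) * g \<le> int (card (T \<union> reflect ` T))"
    using \<open>finite T\<close> by (intro card_parallelogram_ge[OF \<open>a \<noteq> b\<close> apex[unfolded g_def] \<open>m \<ge> 1\<close>,
        folded g_def]) simp_all
  also have "card (T \<union> reflect ` T) \<le> card T + card (reflect ` T)"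
    by (rule card_Un_le)
  also have "card (reflect ` T) \<le> card T"
    using \<open>finite T\<close> by (rule card_image_le)
  finally show ?thesis
    by linarith
qed

section \<open>Processing an unresolved edge\<close>

definition edge_region :: "pt set \<Rightarrow> pt \<Rightarrow> pt \<Rightarrow> real \<times> real \<Rightarrow> pt set" where
  "edge_region S a b c = {p \<in> S. 0 < outd a b p \<and> rpt p \<in> convex hull {rpt a, rpt b, c}}"

definition valid_edge :: "pt set \<Rightarrow> edge \<Rightarrow> bool" where
  "valid_edge S e \<longleftrightarrow> (case e of (a, b, P) \<Rightarrow> a \<in> S \<and> b \<in> S \<and> (\<exists>c. P = edge_region S a b c))"

lemma edge_region_degenerate: "edge_region S a b (rpt a) = {}"
proof -
  have "False" if p: "rpt p \<in> convex hull {rpt a, rpt b, rpt a}" and "0 < outd a b p" for p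
  proof -
    have "real_cross (rpt p - rpt a) (rpt b - rpt a) > 0"
      using that(2) by (simp add: real_cross_outd)
    from apex_height_pos[OF p this] show False
      by (simp add: real_cross_def)
  qed
  then show ?thesis
    unfolding edge_region_def by blast
qed

lemma valid_edge_resolved: "a \<in> S \<Longrightarrow> b \<in> S \<Longrightarrow> valid_edge S (a, b, {})"
  unfolding valid_edge_def prod.case using edge_region_degenerate[of S a b, symmetric] by blast

lemma digital_convex_hull_mem:
  assumes "digital_convex S" and "X \<subseteq> S" and "rpt p \<in> convex hull (rpt ` X)"
  shows "p \<in> S"
proof -
  have "convex hull (rpt ` X) \<subseteq> convex hull (rpt ` S)"
    using assms(2) by (intro hull_mono) auto
  then have "rpt p \<in> rpt ` S"
    using assms(1,3) unfolding digital_convex_def by auto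
  then show ?thesis
    by (auto simp: rpt_eq_iff)
qed

lemma real_cross_add_scaled: "real_cross u (v + t *\<^sub>R w) = real_cross u v + t * real_cross u w"
  by (simp add: real_cross_def algebra_simps)

locale unresolved_edge =
  fixes S :: "pt set" and a b :: pt and c :: "real \<times> real" and P :: "pt set"
  assumes finite_S: "finite S" and digital_convex_S: "digital_convex S"
    and a_in_S: "a \<in> S" and b_in_S: "b \<in> S"
    and P_eq: "P = edge_region S a b c" and P_nonempty: "P \<noteq> {}"
begin

definition h where "h = Max (outd a b ` P)"

definition farthest_pts where "farthest_pts = farthest a b P"

definition f1 where "f1 = first_along a b farthest_pts"

definition f2 where "f2 = last_along a b farthest_pts"

definition g where "g = gcd (fst (b - a)) (snd (b - a))"

definition m where "m = h div g"

definition left_pts where "left_pts = right_of a f1 P"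

definition right_pts where "right_pts = right_of f2 b P"

lemma P_subset: "P \<subseteq> S"
  and outd_pos: "p \<in> P \<Longrightarrow> 0 < outd a b p"
  and in_apex_triangle: "p \<in> P \<Longrightarrow> rpt p \<in> convex hull {rpt a, rpt b, c}"
  and P_memI: "p \<in> S \<Longrightarrow> 0 < outd a b p \<Longrightarrow> rpt p \<in> convex hull {rpt a, rpt b, c} \<Longrightarrow> p \<in> P"
  using P_eq by (auto simp: edge_region_def)

lemma finite_P: "finite P"
  using P_subset finite_S by (rule finite_subset)

lemma a_ne_b: "a \<noteq> b"
proof -
  obtain p where "p \<in> P"
    using P_nonempty by blast
  then have "0 < outd a b p"
    by (rule outd_pos)
  then show ?thesis
    by (auto simp: outd_def cross_def)
qed

lemma apex_pos: "real_cross (c - rpt a) (rpt b - rpt a) > 0"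
proof -
  obtain p where "p \<in> P"
    using P_nonempty by blast
  then show ?thesis
    using apex_height_pos[OF in_apex_triangle] outd_pos by (simp add: real_cross_outd)
qed

lemma outd_le_h: "p \<in> P \<Longrightarrow> outd a b p \<le> h"
  unfolding h_def using finite_P by simp

lemma farthest_pts_eq: "farthest_pts = {p \<in> P. outd a b p = h}"
  unfolding farthest_pts_def farthest_def h_def ..

lemma farthest_pts_nonempty: "farthest_pts \<noteq> {}"
proof -
  have "h \<in> outd a b ` P"
    unfolding h_def using finite_P P_nonempty by (intro Max_in) auto
  then obtain p where "p \<in> P" "outd a b p = h"
    by (metis imageE)
  then show ?thesis
    unfolding farthest_pts_eq by blast
qed

lemma finite_farthest_pts: "finite farthest_pts"
  unfolding farthest_pts_eq using finite_P by simp

lemma h_pos: "h > 0"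
proof -
  obtain p where "p \<in> farthest_pts"
    using farthest_pts_nonempty by blast
  then show ?thesis
    using outd_pos[of p] unfolding farthest_pts_eq by simp
qed

lemma f1: "f1 \<in> farthest_pts \<and> (\<forall>q\<in>farthest_pts. dotp (b - a) f1 \<le> dotp (b - a) q)"
  unfolding f1_def using finite_farthest_pts farthest_pts_nonempty a_ne_b
  by (rule first_along_least) (simp add: farthest_pts_eq)

lemma f2: "f2 \<in> farthest_pts \<and> (\<forall>q\<in>farthest_pts. dotp (b - a) q \<le> dotp (b - a) f2)"
  unfolding f2_def using finite_farthest_pts farthest_pts_nonempty a_ne_b
  by (rule last_along_greatest) (simp add: farthest_pts_eq)

lemma f1_in_P: "f1 \<in> P" and f2_in_P: "f2 \<in> P" and outd_f1: "outd a b f1 = h" and outd_f2: "outd a b f2 = h"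
  using f1 f2 unfolding farthest_pts_eq by auto

lemma g_pos: "g > 0"
  using a_ne_b by (auto simp: g_def prod_eq_iff)

lemma h_eq: "h = m * g"
  using gcd_dvd_outd[of b a f1] outd_f1 unfolding m_def g_def by simp

lemma m_ge_1: "m \<ge> 1"
proof -
  have "0 < m * g"
    using h_pos h_eq by simp
  then show ?thesis
    using g_pos by (simp add: zero_less_mult_iff)
qed

lemma level_offset:
  assumes "p \<in> P" and "q \<in> P" and "outd a b p = outd a b q"
  obtains s where "\<bar>s\<bar> \<le> 1" and "rpt q - rpt p = s *\<^sub>R (rpt b - rpt a)"
    and "0 \<le> s \<longleftrightarrow> dotp (b - a) p \<le> dotp (b - a) q"
proof -
  obtain s where s: "\<bar>s\<bar> \<le> 1" "fst (rpt q) - fst (rpt p) = s * (fst (rpt b) - fst (rpt a))"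
      "snd (rpt q) - snd (rpt p) = s * (snd (rpt b) - snd (rpt a))"
    using triangle_level_diff[OF _ in_apex_triangle[OF assms(1)] in_apex_triangle[OF assms(2)]]
      apex_pos assms(3) by (auto simp: real_cross_outd)
  have dx: "real_of_int (fst q) - real_of_int (fst p) = s * (real_of_int (fst b) - real_of_int (fst a))"
    and dy: "real_of_int (snd q) - real_of_int (snd p) = s * (real_of_int (snd b) - real_of_int (snd a))"
    using s(2,3) by (simp_all add: rpt_def)
  have "of_int (dotp (b - a) q - dotp (b - a) p) =
      (real_of_int (fst b) - real_of_int (fst a)) * (real_of_int (fst q) - real_of_int (fst p)) +
      (real_of_int (snd b) - real_of_int (snd a)) * (real_of_int (snd q) - real_of_int (snd p))"
    by (simp add: dotp_def algebra_simps)
  also have "\<dots> = s * of_int (dotp (b - a) (b - a))"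
    unfolding dx dy by (simp add: dotp_def algebra_simps)
  finally have diff: "of_int (dotp (b - a) q - dotp (b - a) p) = s * of_int (dotp (b - a) (b - a))" .
  have "dotp (b - a) (b - a) > 0"
    using a_ne_b by (auto simp: dotp_def prod_eq_iff sum_squares_gt_zero_iff)
  then have "0 \<le> s \<longleftrightarrow> 0 \<le> s * of_int (dotp (b - a) (b - a))"
    by (simp add: zero_le_mult_iff)
  also have "\<dots> \<longleftrightarrow> dotp (b - a) p \<le> dotp (b - a) q"
    unfolding diff[symmetric] by simp
  finally have "0 \<le> s \<longleftrightarrow> dotp (b - a) p \<le> dotp (b - a) q" .
  then show thesis
    using that s by (simp add: prod_eq_iff)
qed

lemma lattice_level_offset:
  assumes "p \<in> P" and "q \<in> P" and "outd a b p = outd a b q"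
  shows "\<exists>k. \<bar>k\<bar> \<le> g \<and> g * fst (q - p) = k * fst (b - a) \<and> g * snd (q - p) = k * snd (b - a)"
proof -
  obtain s where "\<bar>s\<bar> \<le> 1" "rpt q - rpt p = s *\<^sub>R (rpt b - rpt a)"
    using level_offset[OF assms] by blast
  then show ?thesis
    unfolding g_def by (rule lattice_multiple)
qed

definition t where "t = (SOME s. 0 \<le> s \<and> rpt f2 - rpt f1 = s *\<^sub>R (rpt b - rpt a))"

lemma t_nonneg: "0 \<le> t" and f2_offset: "rpt f2 - rpt f1 = t *\<^sub>R (rpt b - rpt a)"
proof -
  have "outd a b f1 = outd a b f2"
    using outd_f1 outd_f2 by simp
  then obtain s where "rpt f2 - rpt f1 = s *\<^sub>R (rpt b - rpt a)"
    and "0 \<le> s \<longleftrightarrow> dotp (b - a) f1 \<le> dotp (b - a) f2"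
    using level_offset[OF f1_in_P f2_in_P] by blast
  moreover have "dotp (b - a) f1 \<le> dotp (b - a) f2"
    using f1 f2 by blast
  ultimately have "\<exists>s. 0 \<le> s \<and> rpt f2 - rpt f1 = s *\<^sub>R (rpt b - rpt a)"
    by auto
  then have "0 \<le> t \<and> rpt f2 - rpt f1 = t *\<^sub>R (rpt b - rpt a)"
    unfolding t_def by (rule someI_ex)
  then show "0 \<le> t" "rpt f2 - rpt f1 = t *\<^sub>R (rpt b - rpt a)"
    by auto
qed

lemma farthest_offset:
  assumes "p \<in> farthest_pts"
  obtains s where "0 \<le> s" and "s \<le> t" and "rpt p - rpt f1 = s *\<^sub>R (rpt b - rpt a)"
proof -
  have p: "p \<in> P" "outd a b p = h"
    using assms unfolding farthest_pts_eq by auto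
  obtain s where s: "rpt p - rpt f1 = s *\<^sub>R (rpt b - rpt a)"
    and "0 \<le> s \<longleftrightarrow> dotp (b - a) f1 \<le> dotp (b - a) p"
    using level_offset[OF f1_in_P p(1)] outd_f1 p(2) by metis
  then have "0 \<le> s"
    using f1 assms by blast
  obtain s' where s': "rpt f2 - rpt p = s' *\<^sub>R (rpt b - rpt a)"
    and "0 \<le> s' \<longleftrightarrow> dotp (b - a) p \<le> dotp (b - a) f2"
    using level_offset[OF p(1) f2_in_P] outd_f2 p(2) by metis
  then have "0 \<le> s'"
    using f2 assms by blast
  have "t *\<^sub>R (rpt b - rpt a) = (rpt f2 - rpt p) + (rpt p - rpt f1)"
    using f2_offset by simp
  also have "\<dots> = (s + s') *\<^sub>R (rpt b - rpt a)"
    unfolding s s' by (simp add: scaleR_add_left)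
  finally have "t *\<^sub>R (rpt b - rpt a) = (s + s') *\<^sub>R (rpt b - rpt a)" .
  moreover have "rpt b - rpt a \<noteq> 0"
    using a_ne_b by (simp add: rpt_eq_iff)
  ultimately have "t = s + s'"
    by simp
  then show thesis
    using that \<open>0 \<le> s\<close> \<open>0 \<le> s'\<close> s by simp
qed

lemma outd_a_f2: "of_int (outd a f2 p) = of_int (outd a f1 p) + t * of_int (outd a b p)"
proof -
  have "rpt f2 - rpt a = (rpt f1 - rpt a) + t *\<^sub>R (rpt b - rpt a)"
    using f2_offset by (simp add: algebra_simps)
  then have "of_int (outd a f2 p) = real_cross (rpt p - rpt a) ((rpt f1 - rpt a) + t *\<^sub>R (rpt b - rpt a))"
    by (simp only: real_cross_outd[symmetric])
  then show ?thesis
    by (simp add: real_cross_add_scaled real_cross_outd)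
qed

lemma outd_f2_b:
  "of_int (outd f2 b p) = of_int (outd a b p) - t * of_int (outd a b p) - of_int (outd a f1 p) - of_int h"
  using outd_via_apex[of f2 b p a] outd_f2 outd_a_f2[of p] by (simp add: algebra_simps)

lemma outd_f1_f2: "of_int (outd f1 f2 p) = t * (of_int (outd a b p) - of_int h)"
proof -
  have "of_int (outd f1 f2 p) = real_cross (rpt p - rpt f1) (t *\<^sub>R (rpt b - rpt a))"
    by (simp only: real_cross_outd[symmetric] f2_offset)
  also have "\<dots> = t * real_cross (rpt p - rpt f1) (rpt b - rpt a)"
    by (simp add: real_cross_def algebra_simps)
  also have "real_cross (rpt p - rpt f1) (rpt b - rpt a) = of_int (outd a b p - outd a b f1)"
    by (simp add: real_cross_def rpt_def outd_def cross_def algebra_simps)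
  finally show ?thesis
    using outd_f1 by simp
qed

lemma outd_a_f1_farthest:
  assumes "p \<in> farthest_pts"
  obtains s where "0 \<le> s" and "s \<le> t" and "of_int (outd a f1 p) = - s * of_int h"
proof -
  obtain s where s: "0 \<le> s" "s \<le> t" "rpt p - rpt f1 = s *\<^sub>R (rpt b - rpt a)"
    using farthest_offset[OF assms] by blast
  have "rpt p - rpt a = (rpt f1 - rpt a) + s *\<^sub>R (rpt b - rpt a)"
    using s(3) by (simp add: algebra_simps)
  then have "of_int (outd a f1 p) = real_cross ((rpt f1 - rpt a) + s *\<^sub>R (rpt b - rpt a)) (rpt f1 - rpt a)"
    by (simp only: real_cross_outd[symmetric])
  also have "\<dots> = - s * real_cross (rpt f1 - rpt a) (rpt b - rpt a)"
    by (simp add: real_cross_def algebra_simps)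
  finally have "of_int (outd a f1 p) = - s * real_cross (rpt f1 - rpt a) (rpt b - rpt a)" .
  then show thesis
    using that s(1,2) outd_f1 by (simp add: real_cross_outd)
qed

lemma left_pts_iff: "p \<in> left_pts \<longleftrightarrow> p \<in> P \<and> 0 < outd a f1 p"
  unfolding left_pts_def right_of_def by simp

lemma right_pts_iff: "p \<in> right_pts \<longleftrightarrow> p \<in> P \<and> 0 < outd f2 b p"
  unfolding right_pts_def right_of_def by simp

lemma outd_f1_b: "outd f1 b p = outd a b p - outd a f1 p - h"
  using outd_via_apex[of f1 b p a] outd_f1 by simp

lemma outd_f1_f2_nonpos: "p \<in> P \<Longrightarrow> outd f1 f2 p \<le> 0"
proof -
  assume "p \<in> P"
  then have "t * (of_int (outd a b p) - of_int h) \<le> 0"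
    using t_nonneg outd_le_h by (simp add: mult_nonneg_nonpos)
  then show ?thesis
    using outd_f1_f2[of p] by simp
qed

lemma middle_empty: "right_of f1 f2 P = {}"
  using outd_f1_f2_nonpos unfolding right_of_def by force

lemma left_right_disjoint: "left_pts \<inter> right_pts = {}"
proof -
  have False if p: "p \<in> P" and left: "0 < outd a f1 p" and right: "0 < outd f2 b p" for p
  proof -
    have "0 \<le> t * of_int (outd a b p)"
      using t_nonneg outd_pos[OF p] by simp
    moreover have "real_of_int (outd a b p) \<le> of_int h" "0 < real_of_int (outd a f1 p)"
      "0 < real_of_int (outd f2 b p)"
      using outd_le_h[OF p] left right by simp_all
    ultimately show False
      using outd_f2_b[of p] by linarith
  qed
  then show ?thesis
    by (auto simp: left_pts_iff right_pts_iff)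
qed

definition low_triangle where
  "low_triangle = {p. 0 < outd a b p \<and> outd a b p < h \<and> outd a f1 p \<le> 0 \<and> outd f1 b p \<le> 0}"

lemma low_triangle_subset: "low_triangle \<subseteq> P"
proof
  fix p assume "p \<in> low_triangle"
  then have p: "0 < outd a b p" "outd a f1 p \<le> 0" "outd f1 b p \<le> 0"
    unfolding low_triangle_def by auto
  have tri: "rpt p \<in> convex hull {rpt a, rpt b, rpt f1}"
    using h_pos outd_f1 p by (intro rpt_in_triangleI) auto
  then have "p \<in> S"
    using a_in_S b_in_S f1_in_P P_subset
    by (intro digital_convex_hull_mem[OF digital_convex_S, of "{a, b, f1}"]) auto
  moreover have "convex hull {rpt a, rpt b, rpt f1} \<subseteq> convex hull {rpt a, rpt b, c}"
    using in_apex_triangle[OF f1_in_P] by (intro hull_minimal) (auto simp: hull_inc)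
  ultimately show "p \<in> P"
    using P_memI p(1) tri by blast
qed

lemma low_triangle_not_child: "p \<in> low_triangle \<Longrightarrow> p \<notin> left_pts \<and> p \<notin> right_pts"
proof -
  assume "p \<in> low_triangle"
  then have p: "0 < outd a b p" "outd a f1 p \<le> 0" "outd a b p - outd a f1 p - h \<le> 0"
    unfolding low_triangle_def outd_f1_b by auto
  have "0 \<le> t * of_int (outd a b p)"
    using t_nonneg p(1) by simp
  moreover have "real_of_int (outd a b p) - of_int (outd a f1 p) - of_int h \<le> 0"
    using p(3) by linarith
  ultimately have "outd f2 b p \<le> 0"
    using outd_f2_b[of p] by linarith
  then show ?thesis
    using p(2) unfolding left_pts_iff right_pts_iff by auto
qed

lemma farthest_not_child: "p \<in> farthest_pts \<Longrightarrow> p \<notin> left_pts \<and> p \<notin> right_pts"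
proof -
  assume p: "p \<in> farthest_pts"
  then obtain s where s: "0 \<le> s" "s \<le> t" "of_int (outd a f1 p) = - s * of_int h"
    by (rule outd_a_f1_farthest)
  have "outd a b p = h"
    using p unfolding farthest_pts_eq by simp
  moreover have "0 \<le> s * of_int h" "s * of_int h \<le> t * of_int h"
    using s h_pos by (simp_all add: mult_right_mono)
  ultimately have "outd a f1 p \<le> 0" "outd f2 b p \<le> 0"
    using outd_f2_b[of p] s(3) by simp_all
  then show ?thesis
    unfolding left_pts_iff right_pts_iff by auto
qed

lemma card_lower_le: "int (card {p \<in> P. outd a b p < h}) \<le> (m - 1) * (2 * g + 1)"
proof -
  have "int (card {p \<in> P. outd a b p < h}) \<le> (m - 1) * (2 * gcd (fst (b - a)) (snd (b - a)) + 1)"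
  proof (rule card_strip_le)
    show "finite {p \<in> P. outd a b p < h}"
      using finite_P by simp
    show "0 < outd a b p \<and> outd a b p < m * gcd (fst (b - a)) (snd (b - a))"
      if "p \<in> {p \<in> P. outd a b p < h}" for p
      using that outd_pos h_eq unfolding g_def by auto
    show "\<exists>k. \<bar>k\<bar> \<le> gcd (fst (b - a)) (snd (b - a)) \<and>
        gcd (fst (b - a)) (snd (b - a)) * fst (q - p) = k * fst (b - a) \<and>
        gcd (fst (b - a)) (snd (b - a)) * snd (q - p) = k * snd (b - a)"
      if "p \<in> {p \<in> P. outd a b p < h}" "q \<in> {p \<in> P. outd a b p < h}" "outd a b p = outd a b q" for p q
      using lattice_level_offset[of p q] that unfolding g_def by auto
  qed (use a_ne_b m_ge_1 in auto)
  then show ?thesis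
    unfolding g_def .
qed

lemma card_low_triangle_ge: "(m - 1) * g \<le> 2 * int (card low_triangle)"
  unfolding g_def
proof (rule card_lattice_triangle_ge)
  show "outd a b f1 = m * gcd (fst (b - a)) (snd (b - a))"
    using outd_f1 h_eq unfolding g_def by simp
  show "finite low_triangle"
    using finite_P low_triangle_subset by (rule finite_subset[rotated])
  show "low_triangle = {p. 0 < outd a b p \<and> outd a b p < m * gcd (fst (b - a)) (snd (b - a)) \<and>
      outd a f1 p \<le> 0 \<and> outd f1 b p \<le> 0}"
    unfolding low_triangle_def h_eq g_def ..
qed (use a_ne_b m_ge_1 in auto)

lemma card_P_le: "card P + 1 \<le> 7 * (card low_triangle + card farthest_pts)"
proof -
  have "P = {p \<in> P. outd a b p < h} \<union> farthest_pts" "{p \<in> P. outd a b p < h} \<inter> farthest_pts = {}"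
    unfolding farthest_pts_eq using outd_le_h by force+
  then have "card P = card {p \<in> P. outd a b p < h} + card farthest_pts"
    using finite_P by (metis card_Un_disjoint finite_Un)
  moreover have "(m - 1) * (2 * g + 1) \<le> (m - 1) * (3 * g)"
    using m_ge_1 g_pos by (intro mult_left_mono) auto
  then have "card {p \<in> P. outd a b p < h} \<le> 6 * card low_triangle"
    using card_lower_le card_low_triangle_ge by linarith
  moreover have "card farthest_pts \<ge> 1"
    using finite_farthest_pts farthest_pts_nonempty by (simp add: Suc_le_eq card_gt_0_iff)
  ultimately show ?thesis
    unfolding distrib_left by linarith
qed

lemma card_children_le: "card left_pts + card right_pts + card low_triangle + card farthest_pts \<le> card P"
proof -
  have sub: "left_pts \<subseteq> P" "right_pts \<subseteq> P" "farthest_pts \<subseteq> P"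
    by (auto simp: left_pts_iff right_pts_iff farthest_pts_eq)
  then have "finite low_triangle" "finite farthest_pts" "finite left_pts" "finite right_pts"
    using finite_P low_triangle_subset by (auto intro: finite_subset)
  moreover have "low_triangle \<inter> farthest_pts = {}"
    unfolding low_triangle_def farthest_pts_eq by auto
  moreover have "(left_pts \<union> right_pts) \<inter> (low_triangle \<union> farthest_pts) = {}"
    using low_triangle_not_child farthest_not_child by blast
  ultimately have "card ((left_pts \<union> right_pts) \<union> (low_triangle \<union> farthest_pts)) =
      card left_pts + card right_pts + card low_triangle + card farthest_pts"
    using left_right_disjoint by (simp add: card_Un_disjoint)
  moreover have "(left_pts \<union> right_pts) \<union> (low_triangle \<union> farthest_pts) \<subseteq> P"
    using low_triangle_subset sub by auto
  ultimately show ?thesis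
    using finite_P by (metis card_mono)
qed

lemma potential_decrease: "card P + 1 + 7 * (card left_pts + card right_pts) \<le> 7 * card P"
  using card_P_le card_children_le unfolding distrib_left by linarith

lemma valid_left_child: "valid_edge S (a, f1, left_pts)"
proof -
  define c1 where "c1 = rpt a + (of_int h / real_cross (c - rpt a) (rpt b - rpt a)) *\<^sub>R (c - rpt a)"
  have h_f1: "real_cross (rpt f1 - rpt a) (rpt b - rpt a) = of_int h"
    using outd_f1 by (simp add: real_cross_outd)
  have "left_pts = edge_region S a f1 c1"
  proof (intro set_eqI iffI)
    fix p assume "p \<in> left_pts"
    then have p: "p \<in> P" "0 < outd a f1 p"
      by (auto simp: left_pts_iff)
    have "rpt p \<in> convex hull {rpt a, rpt f1, c1}"
      unfolding c1_def
      by (rule left_subtriangleI[OF apex_pos in_apex_triangle[OF f1_in_P] h_f1 _ in_apex_triangle[OF p(1)]])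
        (use h_pos outd_le_h[OF p(1)] p(2) in \<open>simp_all add: real_cross_outd\<close>)
    then show "p \<in> edge_region S a f1 c1"
      using p P_subset by (auto simp: edge_region_def)
  next
    fix p assume "p \<in> edge_region S a f1 c1"
    then have p: "p \<in> S" "0 < outd a f1 p" "rpt p \<in> convex hull {rpt a, rpt f1, c1}"
      by (auto simp: edge_region_def)
    have "rpt p \<in> convex hull {rpt a, rpt b, c} \<and> real_cross (rpt p - rpt a) (rpt b - rpt a) > 0"
      by (rule left_subtriangleD[OF apex_pos in_apex_triangle[OF f1_in_P] h_f1])
        (use p(2,3) in \<open>simp_all add: c1_def real_cross_outd\<close>)
    then show "p \<in> left_pts"
      using P_memI p by (auto simp: left_pts_iff real_cross_outd)
  qed
  then show ?thesis
    unfolding valid_edge_def prod.case using a_in_S f1_in_P P_subset by blast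
qed

lemma valid_right_child: "valid_edge S (f2, b, right_pts)"
proof -
  define c2 where "c2 = rpt b + (of_int h / real_cross (c - rpt a) (rpt b - rpt a)) *\<^sub>R (c - rpt b)"
  have h_f2: "real_cross (rpt f2 - rpt a) (rpt b - rpt a) = of_int h"
    using outd_f2 by (simp add: real_cross_outd)
  have "right_pts = edge_region S f2 b c2"
  proof (intro set_eqI iffI)
    fix p assume "p \<in> right_pts"
    then have p: "p \<in> P" "0 < outd f2 b p"
      by (auto simp: right_pts_iff)
    have "rpt p \<in> convex hull {rpt f2, rpt b, c2}"
      unfolding c2_def
      by (rule right_subtriangleI[OF apex_pos in_apex_triangle[OF f2_in_P] h_f2 _ in_apex_triangle[OF p(1)]])
        (use h_pos outd_le_h[OF p(1)] p(2) in \<open>simp_all add: real_cross_outd\<close>)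
    then show "p \<in> edge_region S f2 b c2"
      using p P_subset by (auto simp: edge_region_def)
  next
    fix p assume "p \<in> edge_region S f2 b c2"
    then have p: "p \<in> S" "0 < outd f2 b p" "rpt p \<in> convex hull {rpt f2, rpt b, c2}"
      by (auto simp: edge_region_def)
    have "rpt p \<in> convex hull {rpt a, rpt b, c} \<and> real_cross (rpt p - rpt a) (rpt b - rpt a) > 0"
      by (rule right_subtriangleD[OF apex_pos in_apex_triangle[OF f2_in_P] h_f2])
        (use p(2,3) in \<open>simp_all add: c2_def real_cross_outd\<close>)
    then show "p \<in> right_pts"
      using P_memI p by (auto simp: right_pts_iff real_cross_outd)
  qed
  then show ?thesis
    unfolding valid_edge_def prod.case using b_in_S f2_in_P P_subset by blast
qed

lemma stored_point_cover:
  assumes "p \<in> P"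
  shows "p \<in> left_pts \<or> p \<in> right_pts \<or> rpt p \<in> convex hull (rpt ` {a, b, f1, f2})"
proof (cases "p \<in> left_pts \<or> p \<in> right_pts")
  case False
  then have left: "outd a f1 p \<le> 0" and right: "outd f2 b p \<le> 0"
    using assms by (auto simp: left_pts_iff right_pts_iff)
  show ?thesis
  proof (cases "outd f1 b p \<le> 0")
    case True
    then have "rpt p \<in> convex hull {rpt a, rpt b, rpt f1}"
      using h_pos outd_f1 outd_pos[OF assms] left by (intro rpt_in_triangleI) auto
    moreover have "convex hull {rpt a, rpt b, rpt f1} \<subseteq> convex hull (rpt ` {a, b, f1, f2})"
      by (rule hull_mono) auto
    ultimately show ?thesis
      by blast
  next
    case False
    have "t \<noteq> 0"
      using outd_f2_b[of p] outd_f1_b[of p] right False by auto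
    then have "0 < t * of_int h"
      using t_nonneg h_pos by simp
    moreover have "outd a f2 f2 = 0"
      by (simp add: outd_def cross_def)
    then have "of_int (outd a f1 f2) = - t * of_int h"
      using outd_a_f2[of f2] outd_f2 by simp
    ultimately have "0 < outd f1 b f2"
      using outd_f1_b[of f2] outd_f2 by simp
    moreover have "outd f1 f2 p \<le> 0"
      using assms by (rule outd_f1_f2_nonpos)
    ultimately have "rpt p \<in> convex hull {rpt f1, rpt b, rpt f2}"
      using False right by (intro rpt_in_triangleI) auto
    moreover have "convex hull {rpt f1, rpt b, rpt f2} \<subseteq> convex hull (rpt ` {a, b, f1, f2})"
      by (rule hull_mono) auto
    ultimately show ?thesis
      by blast
  qed
qed blast

lemma process_edge_eq:
  "process_edge (a, b, P) =
     (a, f1, left_pts) # (if f1 = f2 then [] else [(f1, f2, {})]) @ [(f2, b, right_pts)]"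
  using P_nonempty middle_empty
  by (cases "f1 = f2")
    (simp_all add: process_edge_def Let_def farthest_pts_def[symmetric] f1_def[symmetric]
      f2_def[symmetric] left_pts_def right_pts_def)

end

section \<open>The main loop\<close>

lemma unresolved_edgeI:
  assumes "finite S" and "digital_convex S" and "valid_edge S (a, b, P)" and "P \<noteq> {}"
  obtains c where "unresolved_edge S a b c P"
  using assms unfolding valid_edge_def unresolved_edge_def by auto

definition edge_cost :: "edge \<Rightarrow> nat" where
  "edge_cost e = (case e of (a, b, P) \<Rightarrow> if P = {} then 0 else card P + 1)"

definition stored_points :: "edge list \<Rightarrow> nat" where
  "stored_points es = sum_list (map (\<lambda>(a, b, P). card P) es)"

lemma step_cost_eq: "step_cost es = sum_list (map edge_cost es)"
  unfolding step_cost_def edge_cost_def by (rule refl)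

lemma qh_space_eq: "qh_space es = length es + stored_points es"
  unfolding qh_space_def stored_points_def ..

lemma process_edge_resolved: "process_edge (a, b, {}) = [(a, b, {})]"
  unfolding process_edge_def by simp

lemma valid_process_edge:
  assumes "finite S" and "digital_convex S" and "valid_edge S e" and "e' \<in> set (process_edge e)"
  shows "valid_edge S e'"
proof -
  obtain a b P where e: "e = (a, b, P)"
    by (cases e)
  show ?thesis
  proof (cases "P = {}")
    case True
    then show ?thesis
      using assms(3,4) by (simp add: e process_edge_resolved)
  next
    case False
    then obtain c where "unresolved_edge S a b c P"
      using assms(1-3) unresolved_edgeI unfolding e by blast
    then interpret unresolved_edge S a b c P .
    have "valid_edge S (f1, f2, {})"
      using f1_in_P f2_in_P P_subset by (intro valid_edge_resolved) auto
    then show ?thesis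
      using assms(4) valid_left_child valid_right_child by (auto simp: e process_edge_eq split: if_splits)
  qed
qed

lemma process_edge_potential:
  assumes "finite S" and "digital_convex S" and "valid_edge S (a, b, P)"
  shows "edge_cost (a, b, P) + 7 * stored_points (process_edge (a, b, P)) \<le> 7 * card P"
proof (cases "P = {}")
  case True
  then show ?thesis
    by (simp add: edge_cost_def stored_points_def process_edge_resolved)
next
  case False
  then obtain c where "unresolved_edge S a b c P"
    using assms unresolved_edgeI by blast
  then interpret unresolved_edge S a b c P .
  show ?thesis
    using potential_decrease False by (simp add: edge_cost_def stored_points_def process_edge_eq)
qed

lemma length_process_edge: "length (process_edge e) \<le> 1 + 2 * edge_cost e"
  by (cases e) (simp add: process_edge_def edge_cost_def Let_def)

lemma fst_in_process_edge: "fst e \<in> qh_vertices (process_edge e)"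
  by (cases e) (simp add: process_edge_def qh_vertices_def Let_def)

lemma process_edge_ends:
  "e' \<in> set (process_edge e) \<Longrightarrow> fst (snd e') = fst (snd e) \<or> fst (snd e') \<in> qh_vertices (process_edge e)"
  by (cases e) (auto simp: process_edge_def qh_vertices_def Let_def split: if_splits)

lemma process_edge_cover:
  assumes "finite S" and "digital_convex S" and "valid_edge S e" and "p \<in> snd (snd e)"
  shows "(\<exists>e'\<in>set (process_edge e). p \<in> snd (snd e')) \<or>
    rpt p \<in> convex hull (rpt ` insert (fst (snd e)) (qh_vertices (process_edge e)))"
proof -
  obtain a b P where e: "e = (a, b, P)"
    by (cases e)
  obtain c where "unresolved_edge S a b c P"
    using assms unresolved_edgeI unfolding e by (metis empty_iff snd_conv)
  then interpret unresolved_edge S a b c P .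
  have "{a, b, f1, f2} \<subseteq> insert b (qh_vertices (process_edge (a, b, P)))"
    by (auto simp: process_edge_eq qh_vertices_def)
  then have "convex hull (rpt ` {a, b, f1, f2}) \<subseteq> convex hull (rpt ` insert b (qh_vertices (process_edge (a, b, P))))"
    by (intro hull_mono image_mono)
  moreover have "p \<in> P"
    using assms(4) by (simp add: e)
  then consider "p \<in> left_pts" | "p \<in> right_pts" | "rpt p \<in> convex hull (rpt ` {a, b, f1, f2})"
    using stored_point_cover by blast
  ultimately show ?thesis
    unfolding e by cases (auto simp: process_edge_eq)
qed

definition hull_invariant :: "pt set \<Rightarrow> edge list \<Rightarrow> bool" where
  "hull_invariant S es \<longleftrightarrow> (\<forall>e\<in>set es. valid_edge S e \<and> fst (snd e) \<in> qh_vertices es) \<and>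
     (\<forall>p\<in>S. (\<exists>e\<in>set es. p \<in> snd (snd e)) \<or> rpt p \<in> convex hull (rpt ` qh_vertices es))"

lemma set_qh_step: "set (qh_step es) = (\<Union>e\<in>set es. set (process_edge e))"
  by (simp add: qh_step_def)

lemma qh_vertices_step_mono: "qh_vertices es \<subseteq> qh_vertices (qh_step es)"
  using fst_in_process_edge by (fastforce simp: qh_vertices_def set_qh_step)

lemma qh_vertices_process_edge: "e \<in> set es \<Longrightarrow> qh_vertices (process_edge e) \<subseteq> qh_vertices (qh_step es)"
  by (auto simp: qh_vertices_def set_qh_step)

lemma hull_invariant_step:
  assumes "finite S" and "digital_convex S" and "hull_invariant S es"
  shows "hull_invariant S (qh_step es)"
proof -
  have valid: "\<And>e. e \<in> set es \<Longrightarrow> valid_edge S e"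
    and ends: "\<And>e. e \<in> set es \<Longrightarrow> fst (snd e) \<in> qh_vertices es"
    and cover: "\<And>p. p \<in> S \<Longrightarrow> (\<exists>e\<in>set es. p \<in> snd (snd e)) \<or> rpt p \<in> convex hull (rpt ` qh_vertices es)"
    using assms(3) unfolding hull_invariant_def by simp_all
  have new_vertices: "insert (fst (snd e)) (qh_vertices (process_edge e)) \<subseteq> qh_vertices (qh_step es)"
    if "e \<in> set es" for e
    using ends[OF that] qh_vertices_step_mono qh_vertices_process_edge[OF that] by blast
  have "valid_edge S e' \<and> fst (snd e') \<in> qh_vertices (qh_step es)" if e': "e' \<in> set (qh_step es)" for e'
  proof -
    obtain e where e: "e \<in> set es" "e' \<in> set (process_edge e)"
      using e' unfolding set_qh_step by blast
    have "valid_edge S e'"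
      using valid_process_edge[OF assms(1,2) valid[OF e(1)] e(2)] .
    moreover have "fst (snd e') \<in> qh_vertices (qh_step es)"
      using process_edge_ends[OF e(2)] new_vertices[OF e(1)] by blast
    ultimately show ?thesis ..
  qed
  moreover have "(\<exists>e'\<in>set (qh_step es). p \<in> snd (snd e')) \<or>
      rpt p \<in> convex hull (rpt ` qh_vertices (qh_step es))" if p: "p \<in> S" for p
  proof (cases "rpt p \<in> convex hull (rpt ` qh_vertices es)")
    case True
    moreover have "convex hull (rpt ` qh_vertices es) \<subseteq> convex hull (rpt ` qh_vertices (qh_step es))"
      using qh_vertices_step_mono by (intro hull_mono image_mono)
    ultimately show ?thesis
      by blast
  next
    case False
    then obtain e where e: "e \<in> set es" "p \<in> snd (snd e)"
      using cover[OF p] by blast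
    have "convex hull (rpt ` insert (fst (snd e)) (qh_vertices (process_edge e))) \<subseteq>
        convex hull (rpt ` qh_vertices (qh_step es))"
      using new_vertices[OF e(1)] by (intro hull_mono image_mono)
    moreover have "set (process_edge e) \<subseteq> set (qh_step es)"
      using e(1) unfolding set_qh_step by blast
    moreover note process_edge_cover[OF assms(1,2) valid[OF e(1)] e(2)]
    ultimately show ?thesis
      by blast
  qed
  ultimately show ?thesis
    unfolding hull_invariant_def by blast
qed

lemma potential_step:
  assumes "finite S" and "digital_convex S" and "\<forall>e\<in>set es. valid_edge S e"
  shows "step_cost es + 7 * stored_points (qh_step es) \<le> 7 * stored_points es"
  using assms(3)
proof (induction es)
  case Nil
  then show ?case
    by (simp add: step_cost_eq stored_points_def qh_step_def)
next
  case (Cons e es)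
  obtain a b P where e: "e = (a, b, P)"
    by (cases e)
  have "edge_cost e + 7 * stored_points (process_edge e) \<le> 7 * card P"
    using process_edge_potential[OF assms(1,2)] Cons.prems by (simp add: e)
  then show ?case
    using Cons by (simp add: e step_cost_eq stored_points_def qh_step_def)
qed

lemma length_qh_step: "length (qh_step es) \<le> length es + 2 * step_cost es"
proof (induction es)
  case (Cons e es)
  then show ?case
    using length_process_edge[of e] by (simp add: qh_step_def step_cost_eq)
qed (simp add: qh_step_def)

lemma hull_invariant_iterate:
  "finite S \<Longrightarrow> digital_convex S \<Longrightarrow> hull_invariant S es \<Longrightarrow> hull_invariant S ((qh_step ^^ k) es)"
  by (induction k) (simp_all add: hull_invariant_step)

lemma potential_iterate:
  assumes "finite S" and "digital_convex S" and "hull_invariant S es"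
  shows "(\<Sum>k<N. step_cost ((qh_step ^^ k) es)) + 7 * stored_points ((qh_step ^^ N) es) \<le> 7 * stored_points es"
proof (induction N)
  case (Suc N)
  have "\<forall>e\<in>set ((qh_step ^^ N) es). valid_edge S e"
    using hull_invariant_iterate[OF assms] unfolding hull_invariant_def by blast
  then have "step_cost ((qh_step ^^ N) es) + 7 * stored_points ((qh_step ^^ Suc N) es) \<le>
      7 * stored_points ((qh_step ^^ N) es)"
    using potential_step[OF assms(1,2)] by simp
  then show ?case
    using Suc.IH by simp
qed simp

lemma length_iterate:
  "length ((qh_step ^^ N) es) \<le> length es + 2 * (\<Sum>k<N. step_cost ((qh_step ^^ k) es))"
proof (induction N)
  case (Suc N)
  then show ?case
    using length_qh_step[of "(qh_step ^^ N) es"] by simp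
qed simp

lemma qh_finished_if_cost_zero: "step_cost es = 0 \<Longrightarrow> qh_finished es"
  by (auto simp: step_cost_eq edge_cost_def qh_finished_def split: if_splits)

text \<open>Every unfinished step costs at least one unit, and the total cost is bounded by the
  initial potential.\<close>

lemma qh_terminates:
  assumes "finite S" and "digital_convex S" and "hull_invariant S es"
  shows "\<exists>k. qh_finished ((qh_step ^^ k) es)"
proof (rule ccontr)
  define M where "M = 7 * stored_points es + 1"
  assume "\<nexists>k. qh_finished ((qh_step ^^ k) es)"
  then have "step_cost ((qh_step ^^ k) es) \<noteq> 0" for k
    using qh_finished_if_cost_zero by blast
  then have "(\<Sum>k<M. 1) \<le> (\<Sum>k<M. step_cost ((qh_step ^^ k) es))"
    by (intro sum_mono) (simp add: Suc_le_eq)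
  then show False
    using potential_iterate[OF assms, of M] by (simp add: M_def)
qed

lemma valid_edge_fst: "valid_edge S e \<Longrightarrow> fst e \<in> S"
  by (cases e) (simp add: valid_edge_def)

lemma convex_hull_qh_vertices:
  assumes "hull_invariant S es" and "qh_finished es"
  shows "convex hull (rpt ` qh_vertices es) = convex hull (rpt ` S)"
proof
  have "qh_vertices es \<subseteq> S"
    using assms(1) valid_edge_fst unfolding hull_invariant_def qh_vertices_def by blast
  then show "convex hull (rpt ` qh_vertices es) \<subseteq> convex hull (rpt ` S)"
    by (intro hull_mono image_mono)
  have "\<forall>e\<in>set es. snd (snd e) = {}"
    using assms(2) by (auto simp: qh_finished_def)
  then have "rpt p \<in> convex hull (rpt ` qh_vertices es)" if "p \<in> S" for p
    using assms(1) that unfolding hull_invariant_def by blast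
  then show "convex hull (rpt ` S) \<subseteq> convex hull (rpt ` qh_vertices es)"
    by (intro hull_minimal) (auto simp: convex_convex_hull)
qed

section \<open>The initial partial hull\<close>

text \<open>With \<open>\<sigma> = 1\<close> this is the lexicographic maximum used by \<open>top_pt\<close>, with \<open>\<sigma> = -1\<close> the
  lexicographic minimum used by \<open>bot_pt\<close>.\<close>

lemma ex1_lex_extreme:
  fixes S :: "pt set" and \<sigma> :: int
  assumes "finite S" and "S \<noteq> {}" and "\<sigma> \<noteq> 0"
  shows "\<exists>!t. t \<in> S \<and>
    (\<forall>p\<in>S. \<sigma> * snd p < \<sigma> * snd t \<or> (snd p = snd t \<and> \<sigma> * fst p \<le> \<sigma> * fst t))"
proof -
  have "\<exists>t\<in>S. \<forall>p\<in>S. \<sigma> * snd p < \<sigma> * snd t \<or> (snd p = snd t \<and> \<sigma> * fst p \<le> \<sigma> * fst t)"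
    using assms(1,2)
  proof (induction rule: finite_ne_induct)
    case (insert x F)
    then obtain t where t: "t \<in> F" "\<forall>p\<in>F. \<sigma> * snd p < \<sigma> * snd t \<or> (snd p = snd t \<and> \<sigma> * fst p \<le> \<sigma> * fst t)"
      by blast
    show ?case
    proof (cases "\<sigma> * snd x < \<sigma> * snd t \<or> (snd x = snd t \<and> \<sigma> * fst x \<le> \<sigma> * fst t)")
      case True
      then show ?thesis
        using t by blast
    next
      case False
      then consider "\<sigma> * snd t < \<sigma> * snd x" | "snd x = snd t" "\<sigma> * fst t < \<sigma> * fst x"
        using assms(3) by fastforce
      then have "\<sigma> * snd p < \<sigma> * snd x \<or> (snd p = snd x \<and> \<sigma> * fst p \<le> \<sigma> * fst x)" if "p \<in> insert x F" for p
        using that t(2) by cases auto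
      then show ?thesis
        by blast
    qed
  qed simp
  moreover have "t = t'" if "\<sigma> * snd t' < \<sigma> * snd t \<or> (snd t' = snd t \<and> \<sigma> * fst t' \<le> \<sigma> * fst t)"
    and "\<sigma> * snd t < \<sigma> * snd t' \<or> (snd t = snd t' \<and> \<sigma> * fst t \<le> \<sigma> * fst t')" for t t'
    using that assms(3) by (auto simp: prod_eq_iff)
  ultimately show ?thesis
    by blast
qed

lemma top_pt:
  assumes "finite S" and "S \<noteq> {}"
  shows "top_pt S \<in> S \<and> (\<forall>p\<in>S. snd p < snd (top_pt S) \<or> (snd p = snd (top_pt S) \<and> fst p \<le> fst (top_pt S)))"
  unfolding top_pt_def by (rule theI') (use ex1_lex_extreme[OF assms, of 1] in simp)

lemma bot_pt:
  assumes "finite S" and "S \<noteq> {}"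
  shows "bot_pt S \<in> S \<and> (\<forall>p\<in>S. snd (bot_pt S) < snd p \<or> (snd p = snd (bot_pt S) \<and> fst (bot_pt S) \<le> fst p))"
  unfolding bot_pt_def by (rule theI') (use ex1_lex_extreme[OF assms, of "-1"] in simp)

lemma extreme_pt_farthest:
  assumes "finite S" and "right_of a b S \<noteq> {}"
  shows "extreme_pt a b S \<in> S" and "0 < outd a b (extreme_pt a b S)"
    and "p \<in> S \<Longrightarrow> outd a b p \<le> outd a b (extreme_pt a b S)"
proof -
  have ne: "S \<noteq> {}"
    using assms(2) by (auto simp: right_of_def)
  have "Max (outd a b ` S) \<in> outd a b ` S"
    using assms(1) ne by (intro Max_in) auto
  then obtain q where "q \<in> S" "outd a b q = Max (outd a b ` S)"
    by (metis imageE)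
  then have "q \<in> farthest a b S"
    by (simp add: farthest_def)
  then have l: "extreme_pt a b S \<in> farthest a b S"
    unfolding extreme_pt_def by (rule someI)
  then show "extreme_pt a b S \<in> S"
    by (simp add: farthest_def)
  show le: "outd a b p \<le> outd a b (extreme_pt a b S)" if "p \<in> S" for p
    using l assms(1) that by (simp add: farthest_def)
  obtain q where "q \<in> S" "0 < outd a b q"
    using assms(2) by (auto simp: right_of_def)
  then show "0 < outd a b (extreme_pt a b S)"
    using le by fastforce
qed

lemma right_of_eq_edge_region:
  assumes "\<And>p. p \<in> S \<Longrightarrow> 0 < outd a b p \<Longrightarrow> rpt p \<in> convex hull {rpt a, rpt b, c}"
  shows "right_of a b S = edge_region S a b c"
  using assms unfolding right_of_def edge_region_def by blast

text \<open>The initial edges are built from a chord \<open>a b\<close> whose endpoints lie on parallel support lines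
  of \<open>S\<close> with direction \<open>d\<close>.\<close>

lemma valid_init_edges:
  assumes "finite S" and "a \<in> S" and "b \<in> S"
    and support_a: "\<And>p. p \<in> S \<Longrightarrow> real_cross (rpt p - rpt a) d \<le> 0"
    and support_b: "\<And>p. p \<in> S \<Longrightarrow> real_cross (rpt p - rpt b) (- d) \<le> 0"
    and strict: "right_of a b S \<noteq> {} \<Longrightarrow> real_cross (rpt b - rpt a) d < 0"
  shows "\<forall>e\<in>set (qh_init_edges a b S). valid_edge S e"
proof (cases "right_of a b S = {}")
  case True
  then show ?thesis
    using assms(2,3) by (simp add: qh_init_edges_def valid_edge_resolved)
next
  case False
  define l where "l = extreme_pt a b S"
  have l: "l \<in> S" "0 < outd a b l" "\<And>p. p \<in> S \<Longrightarrow> outd a b p \<le> outd a b l"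
    unfolding l_def using extreme_pt_farthest[OF assms(1) False] by auto
  have H: "real_cross (rpt l - rpt a) (rpt b - rpt a) > 0"
    and V: "\<And>p. p \<in> S \<Longrightarrow> real_cross (rpt p - rpt a) (rpt b - rpt a) \<le> real_cross (rpt l - rpt a) (rpt b - rpt a)"
    using l by (simp_all add: real_cross_outd)
  have left: "right_of a l S = edge_region S a l
      (rpt l + (real_cross (rpt l - rpt a) d / real_cross (rpt b - rpt a) d) *\<^sub>R (rpt a - rpt b))"
  proof (rule right_of_eq_edge_region)
    fix p assume "p \<in> S" "0 < outd a l p"
    then show "rpt p \<in> convex hull {rpt a, rpt l,
        rpt l + (real_cross (rpt l - rpt a) d / real_cross (rpt b - rpt a) d) *\<^sub>R (rpt a - rpt b)}"
      using H V support_a strict[OF False] l(1)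
      by (intro left_support_triangleI) (simp_all add: real_cross_outd)
  qed
  have right: "right_of l b S = edge_region S l b
      (rpt l + (real_cross (rpt l - rpt b) (- d) / real_cross (rpt a - rpt b) (- d)) *\<^sub>R (rpt b - rpt a))"
  proof (rule right_of_eq_edge_region)
    have "real_cross (rpt a - rpt b) (- d) = real_cross (rpt b - rpt a) d"
      by (simp add: real_cross_def algebra_simps)
    moreover fix p assume "p \<in> S" "0 < outd l b p"
    ultimately show "rpt p \<in> convex hull {rpt l, rpt b,
        rpt l + (real_cross (rpt l - rpt b) (- d) / real_cross (rpt a - rpt b) (- d)) *\<^sub>R (rpt b - rpt a)}"
      using H V support_b strict[OF False] l(1)
      by (intro right_support_triangleI) (simp_all add: real_cross_outd)
  qed
  have "valid_edge S (a, l, right_of a l S)" "valid_edge S (l, b, right_of l b S)"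
    unfolding valid_edge_def prod.case using left right assms(2,3) l(1) by blast+
  then show ?thesis
    using False by (simp add: qh_init_edges_def Let_def l_def[symmetric])
qed

lemma init_edges_cover:
  assumes "finite S" and "p \<in> S" and "0 < outd a b p"
  shows "(\<exists>e\<in>set (qh_init_edges a b S). p \<in> snd (snd e)) \<or>
    rpt p \<in> convex hull (rpt ` insert b (qh_vertices (qh_init_edges a b S)))"
proof -
  have ne: "right_of a b S \<noteq> {}"
    using assms(2,3) unfolding right_of_def by blast
  define l where "l = extreme_pt a b S"
  have es: "qh_init_edges a b S = [(a, l, right_of a l S), (l, b, right_of l b S)]"
    using ne by (simp add: qh_init_edges_def Let_def l_def)
  show ?thesis
  proof (cases "p \<in> right_of a l S \<or> p \<in> right_of l b S")
    case True
    then show ?thesis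
      by (auto simp: es)
  next
    case False
    then have "outd a l p \<le> 0" "outd l b p \<le> 0"
      using assms(2) by (auto simp: right_of_def)
    then have "rpt p \<in> convex hull {rpt a, rpt b, rpt l}"
      using extreme_pt_farthest(2)[OF assms(1) ne] assms(3) by (intro rpt_in_triangleI) (auto simp: l_def)
    moreover have "{rpt a, rpt b, rpt l} \<subseteq> rpt ` insert b (qh_vertices (qh_init_edges a b S))"
      by (auto simp: es qh_vertices_def)
    ultimately show ?thesis
      by (meson hull_mono subsetD)
  qed
qed

lemma init_edges_shape:
  shows "a \<in> qh_vertices (qh_init_edges a b S)"
    and "e \<in> set (qh_init_edges a b S) \<Longrightarrow> fst (snd e) = b \<or> fst (snd e) \<in> qh_vertices (qh_init_edges a b S)"
    and "length (qh_init_edges a b S) \<le> 2"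
    and "finite S \<Longrightarrow> stored_points (qh_init_edges a b S) \<le> 2 * card S"
proof -
  assume "finite S"
  then have "card (right_of u v S) \<le> card S" for u v
    by (intro card_mono) (auto simp: right_of_def)
  then have "card (right_of u v S) + card (right_of v w S) \<le> 2 * card S" for u v w
    by (metis add_mono mult_2)
  then show "stored_points (qh_init_edges a b S) \<le> 2 * card S"
    by (simp add: qh_init_edges_def stored_points_def Let_def)
qed (auto simp: qh_init_edges_def qh_vertices_def Let_def split: if_splits)

lemma rpt_in_top_bot_segment:
  assumes "t \<noteq> b" and "snd b \<le> snd p" and "snd p \<le> snd t"
    and "snd p = snd t \<Longrightarrow> fst p \<le> fst t" and "snd p = snd b \<Longrightarrow> fst b \<le> fst p"
    and "snd t = snd b \<Longrightarrow> fst b \<le> fst t" and "outd t b p = 0"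
  shows "rpt p \<in> convex hull {rpt t, rpt b}"
proof -
  have "rpt p \<in> convex hull {rpt t, rpt b, rpt b}"
  proof (cases "snd b < snd t")
    case True
    define s where "s = (real_of_int (snd t) - real_of_int (snd p)) / (real_of_int (snd t) - real_of_int (snd b))"
    have "real_of_int ((fst p - fst t) * (snd b - snd t)) = real_of_int ((snd p - snd t) * (fst b - fst t))"
      using assms(7) by (simp add: outd_eq)
    then show ?thesis
      using True assms(2,3)
      by (intro convex_hull_3_coordsI[of s 0]) (simp_all add: s_def rpt_def field_simps)
  next
    case False
    then have "snd b = snd t" "snd p = snd t"
      using assms(2,3) by simp_all
    moreover have "fst b < fst t"
      using assms(1,6) calculation by (auto simp: prod_eq_iff)
    ultimately show ?thesis
      using assms(4,5)
      by (intro convex_hull_3_coordsI[of "(real_of_int (fst t) - real_of_int (fst p)) / (real_of_int (fst t) - real_of_int (fst b))" 0])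
        (simp_all add: rpt_def field_simps)
  qed
  then show ?thesis
    by simp
qed

lemma qh_init_singleton:
  assumes "finite S" and "S \<noteq> {}" and "top_pt S = bot_pt S"
  shows "S = {top_pt S}" and "qh_init S = [(top_pt S, top_pt S, {})]"
proof -
  have "p = top_pt S" if "p \<in> S" for p
  proof -
    have "snd p < snd (top_pt S) \<or> (snd p = snd (top_pt S) \<and> fst p \<le> fst (top_pt S))"
      using top_pt[OF assms(1,2)] that by blast
    moreover have "snd (top_pt S) < snd p \<or> (snd p = snd (top_pt S) \<and> fst (top_pt S) \<le> fst p)"
      using bot_pt[OF assms(1,2)] that unfolding assms(3) by blast
    ultimately show ?thesis
      by (auto simp: prod_eq_iff)
  qed
  then show "S = {top_pt S}"
    using top_pt[OF assms(1,2)] by blast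
  show "qh_init S = [(top_pt S, top_pt S, {})]"
    using assms(3) by (simp add: qh_init_def Let_def)
qed

lemma hull_invariant_singleton: "hull_invariant {t} [(t, t, {})]"
  by (simp add: hull_invariant_def qh_vertices_def valid_edge_resolved hull_inc)

lemma qh_init_eq:
  "top_pt S \<noteq> bot_pt S \<Longrightarrow>
    qh_init S = qh_init_edges (top_pt S) (bot_pt S) S @ qh_init_edges (bot_pt S) (top_pt S) S"
  by (simp add: qh_init_def Let_def)

lemma top_bot_y_range:
  assumes "finite S" and "S \<noteq> {}" and "p \<in> S"
  shows "snd (bot_pt S) \<le> snd p" and "snd p \<le> snd (top_pt S)"
  using top_pt[OF assms(1,2)] bot_pt[OF assms(1,2)] assms(3) by force+

lemma valid_qh_init:
  assumes "finite S" and "S \<noteq> {}"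
  shows "\<forall>e\<in>set (qh_init S). valid_edge S e"
proof (cases "top_pt S = bot_pt S")
  case True
  have "top_pt S \<in> S"
    using top_pt[OF assms] by blast
  then show ?thesis
    using qh_init_singleton(2)[OF assms True] by (simp add: valid_edge_resolved)
next
  case False
  define t b where "t = top_pt S" and "b = bot_pt S"
  have in_S: "t \<in> S" "b \<in> S"
    using top_pt[OF assms] bot_pt[OF assms] by (simp_all add: t_def b_def)
  have y_range: "snd b \<le> snd p" "snd p \<le> snd t" if "p \<in> S" for p
    using top_bot_y_range[OF assms that] by (simp_all add: t_def b_def)
  have strict: "snd b < snd t" if "right_of t b S \<noteq> {} \<or> right_of b t S \<noteq> {}"
  proof (rule ccontr)
    assume "\<not> snd b < snd t"
    then have "outd t b p = 0" "outd b t p = 0" if "p \<in> S" for p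
      using y_range[OF that] y_range[OF in_S(1)] by (simp_all add: outd_eq)
    then show False
      using that unfolding right_of_def by auto
  qed
  have cross_horizontal: "real_cross (rpt p - rpt q) (x, 0) = - x * of_int (snd p - snd q)" for p q x
    by (simp add: real_cross_def rpt_def)
  have "\<forall>e\<in>set (qh_init_edges t b S). valid_edge S e"
    using assms(1) in_S
    by (rule valid_init_edges[where d = "(-1, 0)"]) (use y_range strict in \<open>simp_all add: cross_horizontal\<close>)
  moreover have "\<forall>e\<in>set (qh_init_edges b t S). valid_edge S e"
    using assms(1) in_S(2,1)
    by (rule valid_init_edges[where d = "(1, 0)"]) (use y_range strict in \<open>simp_all add: cross_horizontal\<close>)
  ultimately show ?thesis
    using False by (auto simp: qh_init_eq t_def b_def)
qed

lemma qh_init_ends: "e \<in> set (qh_init S) \<Longrightarrow> fst (snd e) \<in> qh_vertices (qh_init S)"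
proof (cases "top_pt S = bot_pt S")
  case False
  let ?es1 = "qh_init_edges (top_pt S) (bot_pt S) S" and ?es2 = "qh_init_edges (bot_pt S) (top_pt S) S"
  have "bot_pt S \<in> qh_vertices ?es2" "top_pt S \<in> qh_vertices ?es1"
    by (simp_all add: init_edges_shape(1))
  moreover assume "e \<in> set (qh_init S)"
  ultimately have "fst (snd e) \<in> qh_vertices ?es1 \<union> qh_vertices ?es2"
    using init_edges_shape(2)[of e "top_pt S" "bot_pt S" S] init_edges_shape(2)[of e "bot_pt S" "top_pt S" S]
    unfolding qh_init_eq[OF False] by auto
  then show ?thesis
    unfolding qh_init_eq[OF False] qh_vertices_def by auto
qed (simp add: qh_init_def qh_vertices_def Let_def)

lemma qh_init_cover:
  assumes "finite S" and "S \<noteq> {}" and "p \<in> S" and "top_pt S \<noteq> bot_pt S"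
  shows "(\<exists>e\<in>set (qh_init S). p \<in> snd (snd e)) \<or> rpt p \<in> convex hull (rpt ` qh_vertices (qh_init S))"
proof -
  define t b where "t = top_pt S" and "b = bot_pt S"
  define es1 es2 where "es1 = qh_init_edges t b S" and "es2 = qh_init_edges b t S"
  have es: "qh_init S = es1 @ es2"
    using assms(4) by (simp add: qh_init_eq t_def b_def es1_def es2_def)
  have "insert b (qh_vertices es1) \<subseteq> qh_vertices (qh_init S)"
    "insert t (qh_vertices es2) \<subseteq> qh_vertices (qh_init S)"
    "{t, b} \<subseteq> qh_vertices (qh_init S)"
    unfolding es es1_def es2_def qh_vertices_def
    using init_edges_shape(1)[of t b S] init_edges_shape(1)[of b t S] by (auto simp: qh_vertices_def)
  then have hulls: "convex hull (rpt ` insert b (qh_vertices es1)) \<subseteq> convex hull (rpt ` qh_vertices (qh_init S))"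
    "convex hull (rpt ` insert t (qh_vertices es2)) \<subseteq> convex hull (rpt ` qh_vertices (qh_init S))"
    "convex hull (rpt ` {t, b}) \<subseteq> convex hull (rpt ` qh_vertices (qh_init S))"
    by (simp_all add: hull_mono image_mono del: image_insert image_empty)
  consider "0 < outd t b p" | "0 < outd b t p" | "outd t b p = 0"
    using outd_swap[of t b p] by linarith
  then show ?thesis
  proof cases
    case 1
    then show ?thesis
      using init_edges_cover[OF assms(1,3) 1] hulls(1) unfolding es1_def[symmetric] es by auto
  next
    case 2
    then show ?thesis
      using init_edges_cover[OF assms(1,3) 2] hulls(2) unfolding es2_def[symmetric] es by auto
  next
    case 3
    have "rpt p \<in> convex hull {rpt t, rpt b}"
      using top_pt[OF assms(1,2)] bot_pt[OF assms(1,2)] top_bot_y_range[OF assms(1-3)] assms(3,4) 3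
      by (intro rpt_in_top_bot_segment) (auto simp: t_def b_def)
    then show ?thesis
      using hulls(3) by auto
  qed
qed

lemma hull_invariant_init:
  assumes "finite S" and "S \<noteq> {}"
  shows "hull_invariant S (qh_init S)"
proof (cases "top_pt S = bot_pt S")
  case True
  then have "S = {top_pt S}" "qh_init S = [(top_pt S, top_pt S, {})]"
    using qh_init_singleton[OF assms] by blast+
  then show ?thesis
    by (metis hull_invariant_singleton)
next
  case False
  then show ?thesis
    unfolding hull_invariant_def
    using valid_qh_init[OF assms] qh_init_ends qh_init_cover[OF assms _ False] by blast
qed

lemma stored_points_append: "stored_points (xs @ ys) = stored_points xs + stored_points ys"
  by (simp add: stored_points_def)

lemma qh_init_size:
  assumes "finite S"
  shows "stored_points (qh_init S) \<le> 4 * card S" and "length (qh_init S) \<le> 4"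
proof -
  have halves: "stored_points (qh_init_edges a b S) \<le> 2 * card S" "length (qh_init_edges a b S) \<le> 2" for a b
    using init_edges_shape(3,4) assms by auto
  have "stored_points (qh_init_edges a b S @ qh_init_edges b a S) \<le> 4 * card S"
    and "length (qh_init_edges a b S @ qh_init_edges b a S) \<le> 4" for a b
    using halves[of a b] halves[of b a] by (simp_all add: stored_points_append)
  then show "stored_points (qh_init S) \<le> 4 * card S" "length (qh_init S) \<le> 4"
    by (simp_all add: qh_init_def Let_def stored_points_def)
qed

theorem theorem1:
  "\<exists>C::nat. \<forall>S :: pt set. finite S \<and> S \<noteq> {} \<and> digital_convex S \<longrightarrow>
     (\<forall>N. qh_time S N \<le> C * card S) \<and>
     (\<forall>k. qh_space ((qh_step ^^ k) (qh_init S)) \<le> C * card S) \<and>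
     (\<exists>k. qh_finished ((qh_step ^^ k) (qh_init S)) \<and>
          convex hull (rpt ` qh_vertices ((qh_step ^^ k) (qh_init S))) = convex hull (rpt ` S))"
proof (rule exI[of _ 64], intro allI impI conjI)
  fix S :: "pt set"
  assume "finite S \<and> S \<noteq> {} \<and> digital_convex S"
  then have fin: "finite S" and ne: "S \<noteq> {}" and dc: "digital_convex S"
    by auto
  have inv: "hull_invariant S (qh_init S)"
    using fin ne by (rule hull_invariant_init)
  note potential = potential_iterate[OF fin dc inv] and init = qh_init_size[OF fin]
  have "card S \<ge> 1"
    using fin ne by (simp add: Suc_le_eq card_gt_0_iff)
  show "qh_time S N \<le> 64 * card S" for N
    using potential[of N] init unfolding qh_time_def by linarith
  show "qh_space ((qh_step ^^ k) (qh_init S)) \<le> 64 * card S" for k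
    using potential[of k] length_iterate[of k "qh_init S"] init \<open>card S \<ge> 1\<close>
    unfolding qh_space_eq by linarith
  obtain k where "qh_finished ((qh_step ^^ k) (qh_init S))"
    using qh_terminates[OF fin dc inv] by blast
  then show "\<exists>k. qh_finished ((qh_step ^^ k) (qh_init S)) \<and>
      convex hull (rpt ` qh_vertices ((qh_step ^^ k) (qh_init S))) = convex hull (rpt ` S)"
    using convex_hull_qh_vertices[OF hull_invariant_iterate[OF fin dc inv]] by blast
qed

end
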